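(* In the setting below, the group $G_M$ has the finite presentation with generators $g_0,g_1,\dots,g_{2n+1}$ and defining relations $g_ig_j=g_jg_i$ for $i,j\in\{1,\dots,2n+1\}$, and $g_0g_ig_0^{-1}=g_1^{m_{i1}}\cdots g_{2n+1}^{m_{i,2n+1}}$ for $i\in\{1,\dots,2n+1\}$.
   Context: Let $n\ge 1$ and let $M=(m_{ij})\in SL(2n+1,\mathbb Z)$. Assume that $M$ has exactly one real eigenvalue $\alpha$, that $\alpha>0$, $\alpha\neq 1$, that $\alpha$ is a simple eigenvalue, and that the remaining eigenvalues are $\beta_1,\dots,\beta_k,\bar\beta_1,\dots,\bar\beta_k$ with $\mathrm{Im}\,\beta_j>0$. Let $W\subset\mathbb C^{2n+1}$ be the direct sum of the generalized eigenspaces of $M$ for $\beta_1,\dots,\beta_k$ (so $\dim_{\mathbb C}W=n$). Fix a real eigenvector $a=(a^{(1)},\dots,a^{(2n+1)})^\top\in\mathbb R^{2n+1}$ of $M$ for $\alpha$ and a basis $b_1,\dots,b_n$ of $W$, $b_j=(b_j^{(1)},\dots,b_j^{(2n+1)})^\top$, and let $R=(r_{\ell j})\in M_n(\mathbb C)$ be given by $Mb_j=\sum_{\ell=1}^n r_{\ell j}b_\ell$. For $i=1,\dots,2n+1$ put $u_i=(a^{(i)},b_1^{(i)},\dots,b_n^{(i)})^\top\in\mathbb R\times\mathbb C^n$. Let $\mathbb H=\{w\in\mathbb C:\mathrm{Im}\,w>0\}$, and define holomorphic automorphisms of $\mathbb H\times\mathbb C^n$ by $g_0(w,z)=(\alpha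 w,R^\top z)$ and $g_i(w,z)=(w,z)+u_i$ for $1\le i\le 2n+1$. Let $G_M$ be the group generated by $g_0,\dots,g_{2n+1}$. *)

theory Defs
  imports Complex_Main "HOL-Combinatorics.Permutations" "HOL-Computational_Algebra.Polynomial"
    "HOL-Algebra.Bij" "HOL-Algebra.Generated_Groups"
begin

text \<open>Vectors in K^N are functions nat => K vanishing outside {1..N};
  N x N matrices are functions nat => nat => K (only entries with indices in {1..N} matter).\<close>

definition supp_vec :: "nat \<Rightarrow> (nat \<Rightarrow> 'a::zero) \<Rightarrow> bool" where
  "supp_vec N v \<longleftrightarrow> (\<forall>i. i \<notin> {1..N} \<longrightarrow> v i = 0)"

definition matvec :: "nat \<Rightarrow> (nat \<Rightarrow> nat \<Rightarrow> 'a::comm_ring_1) \<Rightarrow> (nat \<Rightarrow> 'a) \<Rightarrow> nat \<Rightarrow> 'a" where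
  "matvec N A v = (\<lambda>i. if i \<in> {1..N} then (\<Sum>j=1..N. A i j * v j) else 0)"

definition mdet :: "nat \<Rightarrow> (nat \<Rightarrow> nat \<Rightarrow> 'a::comm_ring_1) \<Rightarrow> 'a" where
  "mdet N A = (\<Sum>p | p permutes {1..N}. of_int (sign p) * (\<Prod>i=1..N. A i (p i)))"

definition cmat :: "(nat \<Rightarrow> nat \<Rightarrow> int) \<Rightarrow> nat \<Rightarrow> nat \<Rightarrow> complex" where
  "cmat M = (\<lambda>i j. of_int (M i j))"

definition char_poly_fn :: "nat \<Rightarrow> (nat \<Rightarrow> nat \<Rightarrow> complex) \<Rightarrow> complex poly" where
  "char_poly_fn N A = mdet N (\<lambda>i j. (if i = j then [:0, 1:] else 0) - [:A i j:])"

definition is_eigenvalue :: "nat \<Rightarrow> (nat \<Rightarrow> nat \<Rightarrow> complex) \<Rightarrow> complex \<Rightarrow> bool" where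
  "is_eigenvalue N A l \<longleftrightarrow> (\<exists>v. supp_vec N v \<and> v \<noteq> (\<lambda>_. 0) \<and> matvec N A v = (\<lambda>i. l * v i))"

definition gen_eigenspace :: "nat \<Rightarrow> (nat \<Rightarrow> nat \<Rightarrow> complex) \<Rightarrow> complex \<Rightarrow> (nat \<Rightarrow> complex) set" where
  "gen_eigenspace N A l =
     {v. supp_vec N v \<and> ((\<lambda>x. \<lambda>i. matvec N A x i - l * x i) ^^ N) v = (\<lambda>_. 0)}"

definition upper_gen_space :: "nat \<Rightarrow> (nat \<Rightarrow> nat \<Rightarrow> complex) \<Rightarrow> (nat \<Rightarrow> complex) set" where
  "upper_gen_space N A =
     {v. \<exists>f. (\<forall>l. is_eigenvalue N A l \<and> Im l > 0 \<longrightarrow> f l \<in> gen_eigenspace N A l)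
            \<and> v = (\<lambda>i. \<Sum>l\<in>{l. is_eigenvalue N A l \<and> Im l > 0}. f l i)}"

definition is_basis_of :: "nat \<Rightarrow> (nat \<Rightarrow> nat \<Rightarrow> complex) \<Rightarrow> (nat \<Rightarrow> complex) set \<Rightarrow> bool" where
  "is_basis_of n b W \<longleftrightarrow>
     (\<forall>j\<in>{1..n}. b j \<in> W)
   \<and> (\<forall>c. (\<lambda>i. \<Sum>j=1..n. c j * b j i) = (\<lambda>_. 0) \<longrightarrow> (\<forall>j\<in>{1..n}. c j = 0))
   \<and> (\<forall>v\<in>W. \<exists>c. v = (\<lambda>i. \<Sum>j=1..n. c j * b j i))"

text \<open>Words in generators indexed by 'i: a letter (i, False) is x_i, (i, True) is x_i^-1.\<close>
type_synonym 'i word = "('i \<times> bool) list"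

definition word_eval :: "('a, 'b) monoid_scheme \<Rightarrow> ('i \<Rightarrow> 'a) \<Rightarrow> 'i word \<Rightarrow> 'a" where
  "word_eval G x w = foldr (\<lambda>(i, e) acc. (if e then inv\<^bsub>G\<^esub> (x i) else x i) \<otimes>\<^bsub>G\<^esub> acc) w \<one>\<^bsub>G\<^esub>"

text \<open>The congruence on words generated by free cancellation and the defining relations:
  two words are equal in the presented group iff they are related.\<close>
inductive word_equiv :: "('i word \<times> 'i word) set \<Rightarrow> 'i word \<Rightarrow> 'i word \<Rightarrow> bool"
  for R where
  refl: "word_equiv R w w"
| sym: "word_equiv R u v \<Longrightarrow> word_equiv R v u"
| trans: "word_equiv R u v \<Longrightarrow> word_equiv R v w \<Longrightarrow> word_equiv R u w"
| cancel: "word_equiv R (u @ [(i, e), (i, \<not> e)] @ v) (u @ v)"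
| rel: "(l, r) \<in> R \<Longrightarrow> word_equiv R (u @ l @ v) (u @ r @ v)"

text \<open>G has the presentation < x_i (i in I) | l = r for (l, r) in R >: the x_i lie in G and
  generate it, the relations hold in G, and every relation holding in G between words
  in the generators follows from the defining relations (i.e. the canonical map from the
  presented group to G is an isomorphism).\<close>
definition has_presentation ::
  "('a, 'b) monoid_scheme \<Rightarrow> 'i set \<Rightarrow> ('i \<Rightarrow> 'a) \<Rightarrow> ('i word \<times> 'i word) set \<Rightarrow> bool" where
  "has_presentation G I x R \<longleftrightarrow>
     x ` I \<subseteq> carrier G
   \<and> generate G (x ` I) = carrier G
   \<and> (\<forall>(l, r)\<in>R. word_eval G x l = word_eval G x r)
   \<and> (\<forall>u v. set (map fst u) \<subseteq> I \<longrightarrow> set (map fst v) \<subseteq> I \<longrightarrow>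
        word_eval G x u = word_eval G x v \<longrightarrow> word_equiv R u v)"

definition gen_power :: "'i \<Rightarrow> int \<Rightarrow> 'i word" where
  "gen_power j m = replicate (nat \<bar>m\<bar>) (j, m < 0)"

definition GM_relations :: "nat \<Rightarrow> (nat \<Rightarrow> nat \<Rightarrow> int) \<Rightarrow> (nat word \<times> nat word) set" where
  "GM_relations N M =
     {([(i, False), (j, False)], [(j, False), (i, False)]) | i j. i \<in> {1..N} \<and> j \<in> {1..N}}
   \<union> {([(0, False), (i, False), (0, True)], concat (map (\<lambda>j. gen_power j (M i j)) [1..<N+1])) | i.
        i \<in> {1..N}}"

definition HC_dom :: "nat \<Rightarrow> (complex \<times> (nat \<Rightarrow> complex)) set" where
  "HC_dom n = {(w, z). Im w > 0 \<and> supp_vec n z}"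

definition GM_gen :: "nat \<Rightarrow> real \<Rightarrow> (nat \<Rightarrow> real) \<Rightarrow> (nat \<Rightarrow> nat \<Rightarrow> complex) \<Rightarrow>
    (nat \<Rightarrow> nat \<Rightarrow> complex) \<Rightarrow> nat \<Rightarrow> (complex \<times> (nat \<Rightarrow> complex) \<Rightarrow> complex \<times> (nat \<Rightarrow> complex))" where
  "GM_gen n \<alpha> a b R k =
     (\<lambda>p \<in> HC_dom n. case p of (w, z) \<Rightarrow>
        if k = 0 then (complex_of_real \<alpha> * w,
                       \<lambda>j. if j \<in> {1..n} then (\<Sum>l=1..n. R l j * z l) else 0)
        else (w + complex_of_real (a k), \<lambda>j. z j + (if j \<in> {1..n} then b j k else 0)))"

definition GM_group :: "nat \<Rightarrow> real \<Rightarrow> (nat \<Rightarrow> real) \<Rightarrow> (nat \<Rightarrow> nat \<Rightarrow> complex) \<Rightarrow>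
    (nat \<Rightarrow> nat \<Rightarrow> complex) \<Rightarrow> (complex \<times> (nat \<Rightarrow> complex) \<Rightarrow> complex \<times> (nat \<Rightarrow> complex)) monoid" where
  "GM_group n \<alpha> a b R =
     (BijGroup (HC_dom n))\<lparr>carrier :=
        generate (BijGroup (HC_dom n)) (GM_gen n \<alpha> a b R ` {0..2*n+1})\<rparr>"

end

theory Submission
  imports Defs "Jordan_Normal_Form.Determinant"
begin

text \<open>
  Using only the defining relations, every word in the generators can be brought into the form
  g_0^{-p} g_1^{c_1} ... g_{2n+1}^{c_{2n+1}} g_0^q, and two such normal forms into forms with the
  same p. Evaluated at the point (i, 0) of H x C^n, the normal form gives
  (alpha^q i + sum_k c_k a^(k), (sum_k c_k b_j^(k))_j). Its imaginary part determines q, since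
  alpha > 0 and alpha \<noteq> 1. The vectors a, b_1, ..., b_n and their conjugates lie in generalised
  eigenspaces of M for pairwise distinct eigenvalues, so they form a basis of C^{2n+1} and no
  nonzero real vector annihilates a and all b_j; hence the rest of the value determines c.
  So words with the same value in G_M are equal modulo the relations.
\<close>

section \<open>Square matrices indexed by {1..N}\<close>

text \<open>Transfer to the 0-based matrices of Jordan_Normal_Form, for determinants and inverses.\<close>

definition mat_of_fun :: "nat \<Rightarrow> (nat \<Rightarrow> nat \<Rightarrow> 'a) \<Rightarrow> 'a mat" where
  "mat_of_fun N F = mat N N (\<lambda>(i, j). F (Suc i) (Suc j))"

definition vec_of_fun :: "nat \<Rightarrow> (nat \<Rightarrow> 'a) \<Rightarrow> 'a vec" where
  "vec_of_fun N x = vec N (\<lambda>i. x (Suc i))"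

definition mat_injective :: "nat \<Rightarrow> (nat \<Rightarrow> nat \<Rightarrow> 'a::field) \<Rightarrow> bool" where
  "mat_injective N F \<longleftrightarrow>
     (\<forall>x. (\<forall>i\<in>{1..N}. (\<Sum>j=1..N. F i j * x j) = 0) \<longrightarrow> (\<forall>j\<in>{1..N}. x j = 0))"

lemma mat_injectiveD:
  "mat_injective N F \<Longrightarrow> \<forall>i\<in>{1..N}. (\<Sum>j=1..N. F i j * x j) = 0 \<Longrightarrow> \<forall>j\<in>{1..N}. x j = 0"
  unfolding mat_injective_def by blast

lemma mat_of_fun_carrier [simp]: "mat_of_fun N F \<in> carrier_mat N N"
  by (simp add: mat_of_fun_def)

lemma vec_of_fun_carrier [simp]: "vec_of_fun N x \<in> carrier_vec N"
  by (simp add: vec_of_fun_def)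

lemma dim_row_mat_of_fun [simp]: "dim_row (mat_of_fun N F) = N"
  by (simp add: mat_of_fun_def)

lemma transpose_mat_of_fun: "transpose_mat (mat_of_fun N F) = mat_of_fun N (\<lambda>i j. F j i)"
  by (auto simp: mat_of_fun_def)

lemma mult_mat_of_fun_vec_of_fun:
  "mat_of_fun N F *\<^sub>v vec_of_fun N x = vec N (\<lambda>i. \<Sum>j=1..N. F (Suc i) j * x j)"
  by (auto simp: mat_of_fun_def vec_of_fun_def mult_mat_vec_def scalar_prod_def
      sum.atLeast1_atMost_eq lessThan_atLeast0)

lemma ball_atLeast1_atMost_iff: "(\<forall>i\<in>{1..N}. P i) \<longleftrightarrow> (\<forall>i<N. P (Suc i))"
proof
  assume "\<forall>i<N. P (Suc i)"
  then show "\<forall>i\<in>{1..N}. P i"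
    by (metis Suc_le_eq atLeastAtMost_iff not0_implies_Suc not_one_le_zero)
qed auto

lemma vec_of_fun_eq_zero_iff: "vec_of_fun N x = 0\<^sub>v N \<longleftrightarrow> (\<forall>j\<in>{1..N}. x j = 0)"
  unfolding ball_atLeast1_atMost_iff by (auto simp: vec_of_fun_def vec_eq_iff)

lemma vec_of_fun_nth: "v \<in> carrier_vec N \<Longrightarrow> vec_of_fun N (\<lambda>j. v $ (j - 1)) = v"
  by (auto simp: vec_of_fun_def)

lemma mat_injective_iff_det: "mat_injective N F \<longleftrightarrow> det (mat_of_fun N F) \<noteq> 0"
proof -
  let ?A = "mat_of_fun N F"
  have kernel: "?A *\<^sub>v vec_of_fun N x = 0\<^sub>v N \<longleftrightarrow> (\<forall>i\<in>{1..N}. (\<Sum>j=1..N. F i j * x j) = 0)" for x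
    unfolding ball_atLeast1_atMost_iff by (auto simp: vec_eq_iff mult_mat_of_fun_vec_of_fun)
  have "mat_injective N F \<longleftrightarrow> (\<forall>x. ?A *\<^sub>v vec_of_fun N x = 0\<^sub>v N \<longrightarrow> vec_of_fun N x = 0\<^sub>v N)"
    by (simp add: mat_injective_def kernel vec_of_fun_eq_zero_iff)
  also have "\<dots> \<longleftrightarrow> (\<forall>v\<in>carrier_vec N. ?A *\<^sub>v v = 0\<^sub>v N \<longrightarrow> v = 0\<^sub>v N)"
  proof (intro iffI ballI impI)
    fix v :: "'a vec"
    assume "\<forall>x. ?A *\<^sub>v vec_of_fun N x = 0\<^sub>v N \<longrightarrow> vec_of_fun N x = 0\<^sub>v N"
      and "v \<in> carrier_vec N" and "?A *\<^sub>v v = 0\<^sub>v N"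
    then show "v = 0\<^sub>v N" by (metis vec_of_fun_nth)
  qed simp
  also have "\<dots> \<longleftrightarrow> det ?A \<noteq> 0"
    using det_0_iff_vec_prod_zero[OF mat_of_fun_carrier] by blast
  finally show ?thesis .
qed

lemma mat_injective_transpose: "mat_injective N (\<lambda>i j. F j i) \<longleftrightarrow> mat_injective N F"
proof -
  have "det (transpose_mat (mat_of_fun N F)) = det (mat_of_fun N F)"
    by (rule det_transpose[OF mat_of_fun_carrier])
  then show ?thesis by (simp add: mat_injective_iff_det transpose_mat_of_fun)
qed

lemma mat_injective_imp_surjective:
  assumes "mat_injective N F"
  shows "\<exists>x. \<forall>i\<in>{1..N}. (\<Sum>j=1..N. F i j * x j) = y i"
proof -
  let ?A = "mat_of_fun N F"
  obtain B where B: "B \<in> carrier_mat N N" "?A * B = 1\<^sub>m N"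
    using det_non_zero_imp_unit[OF mat_of_fun_carrier, where b="()"] assms
    by (auto simp: mat_injective_iff_det Units_def ring_mat_def)
  define w where "w = B *\<^sub>v vec_of_fun N y"
  have w: "w \<in> carrier_vec N" using B by (simp add: w_def)
  have "?A *\<^sub>v w = vec_of_fun N y"
    using B by (simp add: w_def assoc_mult_mat_vec[symmetric, of _ N N _ N])
  then have "?A *\<^sub>v vec_of_fun N (\<lambda>j. w $ (j - 1)) = vec_of_fun N y"
    by (simp only: vec_of_fun_nth[OF w])
  then have "vec N (\<lambda>i. \<Sum>j=1..N. F (Suc i) j * w $ (j - 1)) = vec N (\<lambda>i. y (Suc i))"
    by (subst (asm) mult_mat_of_fun_vec_of_fun) (simp only: vec_of_fun_def)
  then have "(\<Sum>j=1..N. F (Suc i) j * w $ (j - 1)) = y (Suc i)" if "i < N" for i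
    using that by (simp add: vec_eq_iff)
  then have "\<forall>i\<in>{1..N}. (\<Sum>j=1..N. F i j * w $ (j - 1)) = y i"
    unfolding ball_atLeast1_atMost_iff by simp
  then show ?thesis by (rule exI[where x="\<lambda>j. w $ (j - 1)"])
qed

lemma matvec_add: "matvec N A (\<lambda>i. v i + w i) = (\<lambda>i. matvec N A v i + matvec N A w i)"
  by (auto simp: matvec_def sum.distrib distrib_left)

lemma matvec_scale: "matvec N A (\<lambda>i. c * v i) = (\<lambda>i. c * matvec N A v i)"
  by (auto simp: matvec_def sum_distrib_left mult.left_commute)

lemma matvec_diff: "matvec N A (\<lambda>i. v i - w i) = (\<lambda>i. matvec N A v i - matvec N A w i)"
  by (auto simp: matvec_def sum_subtractf right_diff_distrib)

lemma matvec_sum: "matvec N A (\<lambda>i. \<Sum>l\<in>S. f l i) = (\<lambda>i. \<Sum>l\<in>S. matvec N A (f l) i)"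
proof
  fix i
  show "matvec N A (\<lambda>i. \<Sum>l\<in>S. f l i) i = (\<Sum>l\<in>S. matvec N A (f l) i)"
    by (cases "i \<in> {1..N}") (auto simp: matvec_def sum_distrib_left sum.swap[where B=S])
qed

lemma supp_vec_matvec: "supp_vec N (matvec N A v)"
  by (simp add: supp_vec_def matvec_def)

lemma matvec_inj_on:
  fixes A :: "nat \<Rightarrow> nat \<Rightarrow> 'a::field"
  assumes "mat_injective N A"
  shows "inj_on (matvec N A) {v. supp_vec N v}"
proof (rule inj_onI)
  fix v w :: "nat \<Rightarrow> 'a"
  assume "v \<in> {v. supp_vec N v}" "w \<in> {v. supp_vec N v}" and eq: "matvec N A v = matvec N A w"
  have "\<forall>i\<in>{1..N}. (\<Sum>j=1..N. A i j * (v j - w j)) = 0"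
  proof
    fix i assume "i \<in> {1..N}"
    with fun_cong[OF eq, of i] show "(\<Sum>j=1..N. A i j * (v j - w j)) = 0"
      by (simp add: matvec_def right_diff_distrib sum_subtractf)
  qed
  with assms have "\<forall>j\<in>{1..N}. v j - w j = 0" by (rule mat_injectiveD)
  with \<open>v \<in> _\<close> \<open>w \<in> _\<close> show "v = w" by (auto simp: supp_vec_def fun_eq_iff)
qed

lemma matvec_bij_betw:
  fixes A :: "nat \<Rightarrow> nat \<Rightarrow> 'a::field"
  assumes "mat_injective N A"
  shows "bij_betw (matvec N A) {v. supp_vec N v} {v. supp_vec N v}"
proof (rule bij_betw_imageI)
  show "inj_on (matvec N A) {v. supp_vec N v}" using assms by (rule matvec_inj_on)
  show "matvec N A ` {v. supp_vec N v} = {v. supp_vec N v}"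
  proof (intro subset_antisym subsetI)
    fix y :: "nat \<Rightarrow> 'a" assume "y \<in> {v. supp_vec N v}"
    obtain x where x: "\<forall>i\<in>{1..N}. (\<Sum>j=1..N. A i j * x j) = y i"
      using mat_injective_imp_surjective[OF assms] by blast
    let ?x = "\<lambda>j. if j \<in> {1..N} then x j else 0"
    have "matvec N A ?x = y"
      using x \<open>y \<in> _\<close> by (auto simp: matvec_def supp_vec_def fun_eq_iff intro!: sum.cong)
    moreover have "supp_vec N ?x" by (simp add: supp_vec_def)
    ultimately show "y \<in> matvec N A ` {v. supp_vec N v}" by blast
  qed (auto simp: supp_vec_matvec)
qed

lemma sum_atLeast1_atMost_split3:
  fixes g :: "nat \<Rightarrow> 'a::comm_monoid_add"
  shows "(\<Sum>k=1..2*n+1. g k) = g 1 + (\<Sum>j=1..n. g (j+1)) + (\<Sum>j=1..n. g (j+n+1))"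
proof -
  have "(\<Sum>k=1..2*n+1. g k) = (\<Sum>k=1..n+1. g k) + (\<Sum>k=Suc (n+1)..n+1+n. g k)"
    using sum.ub_add_nat[of 1 "n+1" g n] by (simp add: mult_2 add_ac)
  also have "(\<Sum>k=1..n+1. g k) = g 1 + (\<Sum>j=1..n. g (j+1))"
    using sum.atLeast_Suc_atMost[of 1 "n+1" g] sum.shift_bounds_cl_nat_ivl[of g 1 1 n] by simp
  also have "(\<Sum>k=Suc (n+1)..n+1+n. g k) = (\<Sum>j=1..n. g (j+n+1))"
    using sum.shift_bounds_cl_nat_ivl[of g 1 "n+1" n] by (simp add: add_ac)
  finally show ?thesis .
qed

lemma atLeast1_atMost_split3_cases:
  fixes k n :: nat
  assumes "k \<in> {1..2*n+1}" and "P 1" and "\<And>j. j \<in> {1..n} \<Longrightarrow> P (j+1)"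
    and "\<And>j. j \<in> {1..n} \<Longrightarrow> P (j+n+1)"
  shows "P k"
proof -
  consider "k = 1" | "k - 1 \<in> {1..n}" "k = (k-1)+1" | "k-n-1 \<in> {1..n}" "k = (k-n-1)+n+1"
    using assms(1) by fastforce
  then show ?thesis
  proof cases
    case 1
    with assms(2) show ?thesis by simp
  next
    case 2
    with assms(3) show ?thesis by metis
  next
    case 3
    with assms(4) show ?thesis by metis
  qed
qed

section \<open>Generalised eigenspaces\<close>

lemma funpow_commute_apply:
  assumes "\<And>x. f (g x) = g (f x)"
  shows "(f ^^ j) ((g ^^ k) x) = (g ^^ k) ((f ^^ j) x)"
proof -
  have f_past_g: "f ((g ^^ k) y) = (g ^^ k) (f y)" for y
    by (induction k) (simp_all add: assms)
  show ?thesis by (induction j) (simp_all add: f_past_g)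
qed

definition minus_diag :: "nat \<Rightarrow> (nat \<Rightarrow> nat \<Rightarrow> complex) \<Rightarrow> complex \<Rightarrow> (nat \<Rightarrow> complex) \<Rightarrow> nat \<Rightarrow> complex" where
  "minus_diag N A l v = (\<lambda>i. matvec N A v i - l * v i)"

lemma gen_eigenspace_minus_diag:
  "gen_eigenspace N A l = {v. supp_vec N v \<and> (minus_diag N A l ^^ N) v = (\<lambda>_. 0)}"
  by (simp add: gen_eigenspace_def minus_diag_def[abs_def])

lemma minus_diag_pow_add:
  "(minus_diag N A l ^^ k) (\<lambda>i. v i + w i) = (\<lambda>i. (minus_diag N A l ^^ k) v i + (minus_diag N A l ^^ k) w i)"
  by (induction k) (auto simp: minus_diag_def matvec_add algebra_simps)

lemma minus_diag_pow_scale: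
  "(minus_diag N A l ^^ k) (\<lambda>i. c * v i) = (\<lambda>i. c * (minus_diag N A l ^^ k) v i)"
  by (induction k) (auto simp: minus_diag_def matvec_scale algebra_simps)

lemma minus_diag_pow_zero: "(minus_diag N A l ^^ k) (\<lambda>_. 0) = (\<lambda>_. 0)"
  using minus_diag_pow_scale[where c=0] by simp

lemma minus_diag_pow_sum:
  "(minus_diag N A l ^^ k) (\<lambda>i. \<Sum>m\<in>S. f m i) = (\<lambda>i. \<Sum>m\<in>S. (minus_diag N A l ^^ k) (f m) i)"
  by (induction k) (auto simp: minus_diag_def matvec_sum sum_subtractf sum_distrib_left)

lemma minus_diag_commute: "minus_diag N A m (minus_diag N A l v) = minus_diag N A l (minus_diag N A m v)"
  by (simp add: minus_diag_def matvec_diff matvec_scale algebra_simps)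

lemma supp_vec_minus_diag_pow: "supp_vec N v \<Longrightarrow> supp_vec N ((minus_diag N A l ^^ k) v)"
  by (induction k) (auto simp: supp_vec_def minus_diag_def matvec_def)

lemma gen_eigenspace_zero: "(\<lambda>_. 0) \<in> gen_eigenspace N A l"
  by (simp add: gen_eigenspace_minus_diag supp_vec_def minus_diag_pow_zero)

lemma gen_eigenspace_add:
  "v \<in> gen_eigenspace N A l \<Longrightarrow> w \<in> gen_eigenspace N A l \<Longrightarrow> (\<lambda>i. v i + w i) \<in> gen_eigenspace N A l"
  by (auto simp: gen_eigenspace_minus_diag supp_vec_def minus_diag_pow_add)

lemma gen_eigenspace_scale: "v \<in> gen_eigenspace N A l \<Longrightarrow> (\<lambda>i. c * v i) \<in> gen_eigenspace N A l"
  by (auto simp: gen_eigenspace_minus_diag supp_vec_def minus_diag_pow_scale)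

lemma gen_eigenspace_minus_diag_pow_closed:
  assumes "v \<in> gen_eigenspace N A l"
  shows "(minus_diag N A m ^^ k) v \<in> gen_eigenspace N A l"
proof -
  have "(minus_diag N A l ^^ N) ((minus_diag N A m ^^ k) v) = (minus_diag N A m ^^ k) ((minus_diag N A l ^^ N) v)"
    by (rule funpow_commute_apply) (rule minus_diag_commute)
  then show ?thesis
    using assms by (simp add: gen_eigenspace_minus_diag supp_vec_minus_diag_pow minus_diag_pow_zero)
qed

lemma gen_eigenspace_minus_diag_pow_eq_zero:
  assumes v: "v \<in> gen_eigenspace N A l" and "l \<noteq> m" and "(minus_diag N A m ^^ k) v = (\<lambda>_. 0)"
  shows "v = (\<lambda>_. 0)"
  using assms
proof (induction k arbitrary: v)
  case (Suc k)
  have "(minus_diag N A m ^^ k) (minus_diag N A m v) = (\<lambda>_. 0)"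
    using Suc.prems(3) by (simp add: funpow_swap1)
  then have eigen: "minus_diag N A m v = (\<lambda>_. 0)"
    using Suc.IH Suc.prems(1,2) gen_eigenspace_minus_diag_pow_closed[where k=1] by simp
  then have l_step: "minus_diag N A l v = (\<lambda>i. (m - l) * v i)"
    by (auto simp: minus_diag_def fun_eq_iff algebra_simps)
  have "(minus_diag N A l ^^ j) v = (\<lambda>i. (m - l) ^ j * v i)" for j
  proof (induction j)
    case (Suc j)
    have "(minus_diag N A l ^^ Suc j) v = (minus_diag N A l ^^ j) (\<lambda>i. (m - l) * v i)"
      by (simp only: funpow_Suc_right o_apply l_step)
    then show ?case by (simp add: minus_diag_pow_scale Suc.IH mult.assoc)
  qed simp
  then have "(\<lambda>i. (m - l) ^ N * v i) = (\<lambda>_. 0)"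
    using Suc.prems(1) by (simp add: gen_eigenspace_minus_diag)
  then show ?case using Suc.prems(2) by (simp add: fun_eq_iff)
qed simp

lemma gen_eigenspaces_independent:
  assumes "finite S" and "\<And>l. l \<in> S \<Longrightarrow> f l \<in> gen_eigenspace N A l"
    and "(\<lambda>i. \<Sum>l\<in>S. f l i) = (\<lambda>_. 0)"
  shows "\<forall>l\<in>S. f l = (\<lambda>_. 0)"
  using assms
proof (induction S arbitrary: f rule: finite_induct)
  case (insert m S)
  let ?P = "minus_diag N A m ^^ N"
  have "(\<lambda>i. \<Sum>l\<in>insert m S. ?P (f l) i) = (\<lambda>_. 0)"
    using arg_cong[OF insert.prems(2), of ?P] by (simp add: minus_diag_pow_sum minus_diag_pow_zero)
  moreover have "?P (f m) = (\<lambda>_. 0)"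
    using insert.prems(1)[of m] by (simp add: gen_eigenspace_minus_diag)
  ultimately have "(\<lambda>i. \<Sum>l\<in>S. ?P (f l) i) = (\<lambda>_. 0)"
    using insert.hyps by (simp add: fun_eq_iff)
  then have "\<forall>l\<in>S. ?P (f l) = (\<lambda>_. 0)"
    using insert.IH[of "\<lambda>l. ?P (f l)"] insert.prems(1) gen_eigenspace_minus_diag_pow_closed by blast
  then have S0: "\<forall>l\<in>S. f l = (\<lambda>_. 0)"
    using insert.hyps(2) insert.prems(1) gen_eigenspace_minus_diag_pow_eq_zero by (metis insertCI)
  then have "f m = (\<lambda>_. 0)"
    using insert.prems(2) insert.hyps by (simp add: fun_eq_iff)
  with S0 show ?case by simp
qed simp

lemma cnj_gen_eigenspace:
  assumes real: "\<And>i j. cnj (A i j) = A i j" and v: "v \<in> gen_eigenspace N A l"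
  shows "(\<lambda>i. cnj (v i)) \<in> gen_eigenspace N A (cnj l)"
proof -
  have "(minus_diag N A (cnj l) ^^ k) (\<lambda>i. cnj (v i)) = (\<lambda>i. cnj ((minus_diag N A l ^^ k) v i))" for k
    by (induction k) (auto simp: minus_diag_def matvec_def real)
  with v show ?thesis by (auto simp: gen_eigenspace_minus_diag supp_vec_def fun_eq_iff)
qed

definition gen_eigen_sum :: "nat \<Rightarrow> (nat \<Rightarrow> nat \<Rightarrow> complex) \<Rightarrow> complex set \<Rightarrow> (nat \<Rightarrow> complex) set" where
  "gen_eigen_sum N A S = {v. \<exists>f. (\<forall>l\<in>S. f l \<in> gen_eigenspace N A l) \<and> v = (\<lambda>i. \<Sum>l\<in>S. f l i)}"

lemma upper_gen_space_eq_gen_eigen_sum: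
  "upper_gen_space N A = gen_eigen_sum N A {l. is_eigenvalue N A l \<and> Im l > 0}"
  by (simp add: upper_gen_space_def gen_eigen_sum_def)

lemma gen_eigenspace_subset_gen_eigen_sum:
  assumes "finite S" and "l \<in> S"
  shows "gen_eigenspace N A l \<subseteq> gen_eigen_sum N A S"
proof
  fix v assume v: "v \<in> gen_eigenspace N A l"
  let ?f = "\<lambda>m i. if m = l then v i else 0"
  have "?f m = (if m = l then v else (\<lambda>_. 0))" for m by auto
  then have "\<forall>m\<in>S. ?f m \<in> gen_eigenspace N A m" using v gen_eigenspace_zero by simp
  moreover have "v = (\<lambda>i. \<Sum>m\<in>S. ?f m i)" using assms by (simp add: sum.delta)
  ultimately show "v \<in> gen_eigen_sum N A S"
    unfolding gen_eigen_sum_def by (intro CollectI exI[of _ ?f] conjI)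
qed

lemma gen_eigen_sum_zero: "(\<lambda>_. 0) \<in> gen_eigen_sum N A S"
  unfolding gen_eigen_sum_def by (intro CollectI exI[of _ "\<lambda>_ _. 0"]) (simp add: gen_eigenspace_zero)

lemma gen_eigen_sum_add:
  assumes "u \<in> gen_eigen_sum N A S" and "v \<in> gen_eigen_sum N A S"
  shows "(\<lambda>i. u i + v i) \<in> gen_eigen_sum N A S"
proof -
  obtain f g where "\<forall>l\<in>S. f l \<in> gen_eigenspace N A l" "u = (\<lambda>i. \<Sum>l\<in>S. f l i)"
    and "\<forall>l\<in>S. g l \<in> gen_eigenspace N A l" "v = (\<lambda>i. \<Sum>l\<in>S. g l i)"
    using assms by (auto simp: gen_eigen_sum_def)
  then show ?thesis unfolding gen_eigen_sum_def
    by (intro CollectI exI[of _ "\<lambda>l i. f l i + g l i"]) (simp add: gen_eigenspace_add sum.distrib)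
qed

lemma gen_eigen_sum_scale:
  assumes "v \<in> gen_eigen_sum N A S"
  shows "(\<lambda>i. c * v i) \<in> gen_eigen_sum N A S"
proof -
  obtain f where "\<forall>l\<in>S. f l \<in> gen_eigenspace N A l" "v = (\<lambda>i. \<Sum>l\<in>S. f l i)"
    using assms by (auto simp: gen_eigen_sum_def)
  then show ?thesis unfolding gen_eigen_sum_def
    by (intro CollectI exI[of _ "\<lambda>l i. c * f l i"]) (simp add: gen_eigenspace_scale sum_distrib_left)
qed

lemma gen_eigen_sum_sum:
  assumes "\<And>j. j \<in> J \<Longrightarrow> f j \<in> gen_eigen_sum N A S"
  shows "(\<lambda>i. \<Sum>j\<in>J. f j i) \<in> gen_eigen_sum N A S"
  using assms
  by (induction J rule: infinite_finite_induct) (simp_all add: gen_eigen_sum_zero gen_eigen_sum_add)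

lemma supp_vec_gen_eigen_sum: "v \<in> gen_eigen_sum N A S \<Longrightarrow> supp_vec N v"
  by (auto simp: gen_eigen_sum_def gen_eigenspace_def supp_vec_def)

lemma cnj_gen_eigen_sum:
  assumes real: "\<And>i j. cnj (A i j) = A i j" and v: "v \<in> gen_eigen_sum N A S"
  shows "(\<lambda>i. cnj (v i)) \<in> gen_eigen_sum N A (cnj ` S)"
proof -
  obtain f where f: "\<forall>l\<in>S. f l \<in> gen_eigenspace N A l" "v = (\<lambda>i. \<Sum>l\<in>S. f l i)"
    using v by (auto simp: gen_eigen_sum_def)
  let ?g = "\<lambda>l i. cnj (f (cnj l) i)"
  have "\<forall>l\<in>cnj ` S. ?g l \<in> gen_eigenspace N A l"
    using f(1) cnj_gen_eigenspace[OF real] by fastforce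
  moreover have "(\<lambda>i. cnj (v i)) = (\<lambda>i. \<Sum>l\<in>cnj ` S. ?g l i)"
    using f(2) by (simp add: sum.reindex inj_on_def)
  ultimately show ?thesis unfolding gen_eigen_sum_def by (intro CollectI exI[of _ ?g] conjI)
qed

lemma sum_union_disjoint_if:
  assumes "finite S" "finite T" "S \<inter> T = {}"
  shows "(\<Sum>l\<in>S \<union> T. if l \<in> S then f l else g l) = sum f S + sum g T"
proof -
  have "(\<Sum>l\<in>T. if l \<in> S then f l else g l) = sum g T"
    using assms(3) by (intro sum.cong) auto
  with assms show ?thesis by (simp add: sum.union_disjoint)
qed

lemma gen_eigen_sum_union:
  assumes "finite S" "finite T" "S \<inter> T = {}"
    and u: "u \<in> gen_eigen_sum N A S" and v: "v \<in> gen_eigen_sum N A T"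
  shows "(\<lambda>i. u i + v i) \<in> gen_eigen_sum N A (S \<union> T)"
proof -
  obtain f g where f: "\<forall>l\<in>S. f l \<in> gen_eigenspace N A l" "u = (\<lambda>i. \<Sum>l\<in>S. f l i)"
    and g: "\<forall>l\<in>T. g l \<in> gen_eigenspace N A l" "v = (\<lambda>i. \<Sum>l\<in>T. g l i)"
    using u v by (auto simp: gen_eigen_sum_def)
  let ?h = "\<lambda>l. if l \<in> S then f l else g l"
  have "\<forall>l\<in>S \<union> T. ?h l \<in> gen_eigenspace N A l" using f(1) g(1) by auto
  moreover have "(\<lambda>i. u i + v i) = (\<lambda>i. \<Sum>l\<in>S \<union> T. ?h l i)"
    using sum_union_disjoint_if[OF assms(1-3), of "\<lambda>l. f l i" "\<lambda>l. g l i" for i] f(2) g(2)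
    by (simp add: if_distrib[where f="\<lambda>h. h i" for i])
  ultimately show ?thesis unfolding gen_eigen_sum_def by (intro CollectI exI[of _ ?h] conjI)
qed

lemma gen_eigen_sum_direct:
  assumes fin: "finite S" "finite T" and disj: "S \<inter> T = {}"
    and u: "u \<in> gen_eigen_sum N A S" and v: "v \<in> gen_eigen_sum N A T"
    and zero: "(\<lambda>i. u i + v i) = (\<lambda>_. 0)"
  shows "u = (\<lambda>_. 0)"
proof -
  obtain f g where f: "\<forall>l\<in>S. f l \<in> gen_eigenspace N A l" "u = (\<lambda>i. \<Sum>l\<in>S. f l i)"
    and g: "\<forall>l\<in>T. g l \<in> gen_eigenspace N A l" "v = (\<lambda>i. \<Sum>l\<in>T. g l i)"
    using u v by (auto simp: gen_eigen_sum_def)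
  let ?h = "\<lambda>l. if l \<in> S then f l else g l"
  have "(\<lambda>i. \<Sum>l\<in>S \<union> T. ?h l i) = (\<lambda>_. 0)"
    using sum_union_disjoint_if[OF fin disj, of "\<lambda>l. f l i" "\<lambda>l. g l i" for i] f(2) g(2) zero
    by (simp add: if_distrib[where f="\<lambda>h. h i" for i] fun_eq_iff)
  then have "\<forall>l\<in>S \<union> T. ?h l = (\<lambda>_. 0)"
    using fin f(1) g(1) by (intro gen_eigenspaces_independent) auto
  then have "\<forall>l\<in>S. f l = (\<lambda>_. 0)" by (metis UnI1)
  with f(2) show ?thesis by simp
qed

section \<open>Words and relations\<close>

lemmas [trans] = word_equiv.trans

lemma word_equiv_append_cong: "word_equiv R u v \<Longrightarrow> word_equiv R (x @ u @ y) (x @ v @ y)"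
proof (induction rule: word_equiv.induct)
  case (cancel u i e v)
  show ?case using word_equiv.cancel[of R "x @ u" i e "v @ y"] by simp
next
  case (rel l r u v)
  show ?case using word_equiv.rel[OF rel.hyps, of "x @ u" "v @ y"] by simp
qed (auto intro: word_equiv.intros)

lemma word_equiv_append_left: "word_equiv R u v \<Longrightarrow> word_equiv R (x @ u) (x @ v)"
  using word_equiv_append_cong[of R u v x "[]"] by simp

lemma word_equiv_append_right: "word_equiv R u v \<Longrightarrow> word_equiv R (u @ y) (v @ y)"
  using word_equiv_append_cong[of R u v "[]" y] by simp

lemma word_equiv_Cons: "word_equiv R u v \<Longrightarrow> word_equiv R (l # u) (l # v)"
  using word_equiv_append_left[of R u v "[l]"] by simp

lemma word_equiv_cancel_inv_gen: "word_equiv R (u @ (i, True) # (i, False) # v) (u @ v)"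
  using word_equiv.cancel[of R u i True v] by simp

lemma word_equiv_cancel_gen_inv: "word_equiv R (u @ (i, False) # (i, True) # v) (u @ v)"
  using word_equiv.cancel[of R u i False v] by simp

lemma word_equiv_inv_gen_commute:
  assumes "([(j, False), (i, False)], [(i, False), (j, False)]) \<in> R"
  shows "word_equiv R [(i, True), (j, False)] [(j, False), (i, True)]"
proof -
  have "word_equiv R [(i, True), (j, False)] [(i, True), (j, False), (i, False), (i, True)]"
    using word_equiv_cancel_gen_inv[of R "[(i, True), (j, False)]" i "[]"] by (simp add: word_equiv.sym)
  also have "word_equiv R \<dots> [(i, True), (i, False), (j, False), (i, True)]"
    using word_equiv.rel[OF assms, of "[(i, True)]" "[(i, True)]"] by simp
  also have "word_equiv R \<dots> [(j, False), (i, True)]"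
    using word_equiv_cancel_inv_gen[of R "[]" i "[(j, False), (i, True)]"] by simp
  finally show ?thesis .
qed

lemma word_equiv_letters_commute:
  assumes comm: "\<And>i j. i \<in> I \<Longrightarrow> j \<in> I \<Longrightarrow> ([(i, False), (j, False)], [(j, False), (i, False)]) \<in> R"
    and "i \<in> I" "j \<in> I"
  shows "word_equiv R [(i, e), (j, e')] [(j, e'), (i, e)]"
proof -
  have inv_gen: "word_equiv R [(i', True), (j', False)] [(j', False), (i', True)]"
    if "i' \<in> I" "j' \<in> I" for i' j'
    using word_equiv_inv_gen_commute[OF comm] that by blast
  have inv_inv: "word_equiv R [(i, True), (j, True)] [(j, True), (i, True)]"
  proof -
    have "word_equiv R [(i, True), (j, True)] [(j, True), (j, False), (i, True), (j, True)]"
      using word_equiv_cancel_inv_gen[of R "[]" j "[(i, True), (j, True)]"] by (simp add: word_equiv.sym)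
    also have "word_equiv R \<dots> [(j, True), (i, True), (j, False), (j, True)]"
      using word_equiv_append_cong[OF word_equiv.sym[OF inv_gen[OF assms(2,3)]], of "[(j, True)]" "[(j, True)]"]
      by simp
    also have "word_equiv R \<dots> [(j, True), (i, True)]"
      using word_equiv_cancel_gen_inv[of R "[(j, True), (i, True)]" j "[]"] by simp
    finally show ?thesis .
  qed
  show ?thesis
    using assms comm[of i j] inv_gen[of i j] inv_gen[of j i] inv_inv
    by (cases e; cases e') (auto intro: word_equiv.sym word_equiv.rel[of _ _ R "[]" "[]", simplified])
qed

lemma word_eval_Nil [simp]: "word_eval G x [] = \<one>\<^bsub>G\<^esub>"
  by (simp add: word_eval_def)

lemma word_eval_Cons:
  "word_eval G x ((i, e) # w) = (if e then inv\<^bsub>G\<^esub> (x i) else x i) \<otimes>\<^bsub>G\<^esub> word_eval G x w"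
  by (simp add: word_eval_def)

lemma (in group) word_eval_closed: "range x \<subseteq> carrier G \<Longrightarrow> word_eval G x w \<in> carrier G"
proof (induction w)
  case (Cons l w)
  then show ?case by (cases l) (auto simp: word_eval_Cons)
qed simp

lemma (in group) word_eval_append:
  assumes "range x \<subseteq> carrier G"
  shows "word_eval G x (u @ v) = word_eval G x u \<otimes> word_eval G x v"
proof (induction u)
  case (Cons l u)
  have "x i \<in> carrier G" for i using assms by blast
  with Cons show ?case using assms by (cases l) (auto simp: word_eval_Cons m_assoc word_eval_closed)
qed (simp add: assms word_eval_closed)

lemma (in group) word_eval_respects_word_equiv:
  assumes x: "range x \<subseteq> carrier G" and rels: "\<forall>(l, r)\<in>R. word_eval G x l = word_eval G x r"
    and "word_equiv R u v"
  shows "word_eval G x u = word_eval G x v"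
  using \<open>word_equiv R u v\<close>
proof (induction rule: word_equiv.induct)
  case (cancel u i e v)
  have "x i \<in> carrier G" using x by blast
  then have "word_eval G x [(i, e), (i, \<not> e)] = \<one>" by (cases e) (auto simp: word_eval_Cons)
  moreover have "word_eval G x (u @ [(i, e), (i, \<not> e)] @ v)
      = word_eval G x u \<otimes> (word_eval G x [(i, e), (i, \<not> e)] \<otimes> word_eval G x v)"
    by (simp only: word_eval_append[OF x])
  ultimately show ?case using x by (simp add: word_eval_append word_eval_closed)
next
  case (rel l r u v)
  then show ?case using x rels by (auto simp: word_eval_append)
qed auto

lemma subgroup_BijGroup_mult_apply:
  assumes "subgroup H (BijGroup S)" and "g \<in> H" "h \<in> H" "q \<in> S"
  shows "(g \<otimes>\<^bsub>(BijGroup S)\<lparr>carrier := H\<rparr>\<^esub> h) q = g (h q)"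
  using subgroup.subset[OF assms(1)] assms(2-4) by (auto simp: BijGroup_def compose_def)

lemma subgroup_BijGroup_inv_apply:
  assumes H: "subgroup H (BijGroup S)" and "g \<in> H" "q \<in> S"
  shows "(inv\<^bsub>(BijGroup S)\<lparr>carrier := H\<rparr>\<^esub> g) (g q) = q"
proof -
  have g: "g \<in> Bij S" using subgroup.subset[OF H] \<open>g \<in> H\<close> by (auto simp: BijGroup_def)
  then have "g q \<in> S" "inj_on g S" using \<open>q \<in> S\<close> by (auto simp: Bij_def bij_betw_def)
  moreover have "inv\<^bsub>(BijGroup S)\<lparr>carrier := H\<rparr>\<^esub> g = (\<lambda>p\<in>S. inv_into S g p)"
    using group.m_inv_consistent[OF group_BijGroup H \<open>g \<in> H\<close>] inv_BijGroup[OF g] by simp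
  ultimately show ?thesis using \<open>q \<in> S\<close> by simp
qed

lemma word_eval_BijGroup_apply:
  assumes H: "subgroup H (BijGroup S)" and x: "range x \<subseteq> H"
    and x_eq: "\<And>k. x k = (\<lambda>p\<in>S. f (k, False) p)"
    and f_inv: "\<And>k p. p \<in> S \<Longrightarrow> f (k, True) p \<in> S \<and> f (k, False) (f (k, True) p) = p"
    and "p \<in> S"
  shows "word_eval ((BijGroup S)\<lparr>carrier := H\<rparr>) x w p = foldr f w p"
  using \<open>p \<in> S\<close>
proof (induction w)
  case Nil
  then show ?case by (simp add: BijGroup_def)
next
  case (Cons l w)
  let ?G = "(BijGroup S)\<lparr>carrier := H\<rparr>"
  obtain k e where l: "l = (k, e)" by (cases l)
  let ?letter = "if e then inv\<^bsub>?G\<^esub> (x k) else x k"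
  interpret G: group ?G using subgroup.subgroup_is_group[OF H group_BijGroup] .
  have xk: "x k \<in> H" using x by blast
  then have letter: "?letter \<in> H" using G.inv_closed[of "x k"] by simp
  have rest: "word_eval ?G x w \<in> H" using G.word_eval_closed[of x w] x by simp
  have "H \<subseteq> Bij S" using subgroup.subset[OF H] by (simp add: BijGroup_def)
  with rest have "word_eval ?G x w \<in> S \<rightarrow> S" by (blast dest: Bij_imp_funcset)
  then have q: "word_eval ?G x w p \<in> S" using Cons.prems by blast
  have letter_apply: "?letter q = f (k, e) q" if "q \<in> S" for q
  proof (cases e)
    case True
    have "x k (f (k, True) q) = q" using f_inv[OF that] by (simp add: x_eq)
    then have "(inv\<^bsub>?G\<^esub> (x k)) q = f (k, True) q"
      using subgroup_BijGroup_inv_apply[OF H xk] f_inv[OF that] by metis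
    with True show ?thesis by simp
  qed (simp add: x_eq that)
  have "word_eval ?G x (l # w) p = ?letter (word_eval ?G x w p)"
    unfolding l word_eval_Cons by (rule subgroup_BijGroup_mult_apply[OF H letter rest Cons.prems])
  then show ?case using letter_apply[OF q] Cons.IH[OF Cons.prems] by (simp add: l)
qed

definition letter_sign :: "bool \<Rightarrow> int" where
  "letter_sign e = (if e then -1 else 1)"

fun exp_sum :: "nat word \<Rightarrow> nat \<Rightarrow> int" where
  "exp_sum [] = (\<lambda>_. 0)"
| "exp_sum ((i, e) # w) = (exp_sum w)(i := exp_sum w i + letter_sign e)"

lemma exp_sum_append: "exp_sum (u @ v) = (\<lambda>j. exp_sum u j + exp_sum v j)"
  by (induction u rule: exp_sum.induct) (auto simp: fun_eq_iff)

lemma exp_sum_gen_power: "exp_sum (gen_power i m) = (\<lambda>j. if j = i then m else 0)"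
proof -
  have "exp_sum (replicate k (i, e)) = (\<lambda>j. if j = i then letter_sign e * int k else 0)" for k e
    by (induction k) (auto simp: fun_eq_iff algebra_simps)
  then show ?thesis by (auto simp: gen_power_def letter_sign_def fun_eq_iff)
qed

lemma gen_power_zero [simp]: "gen_power i 0 = []"
  by (simp add: gen_power_def)

lemma gen_power_letters: "set (map fst (gen_power i m)) \<subseteq> {i}"
  by (auto simp: gen_power_def)

lemma gen_power_unit: "gen_power i (letter_sign e) = [(i, e)]"
  by (cases e) (simp_all add: gen_power_def letter_sign_def)

lemma word_equiv_letter_gen_power:
  "word_equiv R ((i, e) # gen_power i m) (gen_power i (m + letter_sign e))"
proof -
  have pos: "gen_power i (k + 1) = (i, False) # gen_power i k" if "k \<ge> 0" for k
    using that by (simp add: gen_power_def nat_add_distrib)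
  have neg: "gen_power i k = (i, True) # gen_power i (k + 1)" if "k < 0" for k
  proof -
    have "nat \<bar>k\<bar> = Suc (nat \<bar>k + 1\<bar>)" using that by linarith
    moreover have "k + 1 < 0 \<or> nat \<bar>k + 1\<bar> = 0" using that by linarith
    ultimately show ?thesis using that by (auto simp: gen_power_def)
  qed
  show ?thesis
  proof (cases e)
    case True
    show ?thesis
    proof (cases "m > 0")
      case True
      with pos[of "m - 1"] word_equiv_cancel_inv_gen[of R "[]" i "gen_power i (m - 1)"]
      show ?thesis using \<open>e\<close> by (simp add: letter_sign_def)
    qed (use neg[of "m - 1"] \<open>e\<close> in \<open>simp add: letter_sign_def word_equiv.refl\<close>)
  next
    case False
    show ?thesis
    proof (cases "m \<ge> 0")
      case False
      with neg[of m] word_equiv_cancel_gen_inv[of R "[]" i "gen_power i (m + 1)"]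
      show ?thesis using \<open>\<not> e\<close> by (simp add: letter_sign_def)
    qed (use pos[of m] \<open>\<not> e\<close> in \<open>simp add: letter_sign_def word_equiv.refl\<close>)
  qed
qed

lemma letters_concat_map:
  assumes "\<And>j. j \<in> set js \<Longrightarrow> set (map fst (f j)) \<subseteq> {j}"
  shows "set (map fst (concat (map f js))) \<subseteq> set js"
proof
  fix y assume "y \<in> set (map fst (concat (map f js)))"
  then obtain j l where "j \<in> set js" "l \<in> set (f j)" "y = fst l" by auto
  with assms[of j] show "y \<in> set js" by auto
qed

locale GM_words =
  fixes N :: nat and M :: "nat \<Rightarrow> nat \<Rightarrow> int"
begin

abbreviation GM_equiv :: "nat word \<Rightarrow> nat word \<Rightarrow> bool" (infix "\<approx>" 50) where
  "u \<approx> v \<equiv> word_equiv (GM_relations N M) u v"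

definition transl_word :: "(nat \<Rightarrow> int) \<Rightarrow> nat word" where
  "transl_word c = concat (map (\<lambda>j. gen_power j (c j)) [1..<N+1])"

definition row_mult :: "(nat \<Rightarrow> int) \<Rightarrow> nat \<Rightarrow> int" where
  "row_mult c = (\<lambda>j. \<Sum>i=1..N. c i * M i j)"

definition normal_word :: "nat \<Rightarrow> (nat \<Rightarrow> int) \<Rightarrow> nat \<Rightarrow> nat word" where
  "normal_word p c q = replicate p (0, True) @ transl_word c @ replicate q (0, False)"

lemma conj_relation: "i \<in> {1..N} \<Longrightarrow> ([(0, False), (i, False), (0, True)], transl_word (M i)) \<in> GM_relations N M"
  by (auto simp: GM_relations_def transl_word_def)

lemma letters_commute: "i \<in> {1..N} \<Longrightarrow> j \<in> {1..N} \<Longrightarrow> [(i, e), (j, e')] \<approx> [(j, e'), (i, e)]"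
  by (rule word_equiv_letters_commute[where I="{1..N}"]) (auto simp: GM_relations_def)

lemma letter_commutes_word:
  "i \<in> {1..N} \<Longrightarrow> set (map fst w) \<subseteq> {1..N} \<Longrightarrow> (i, e) # w \<approx> w @ [(i, e)]"
proof (induction w)
  case Nil
  then show ?case by (simp add: word_equiv.refl)
next
  case (Cons l w)
  obtain j e' where l: "l = (j, e')" by (cases l)
  have "(i, e) # l # w \<approx> l # (i, e) # w"
    using word_equiv_append_right[OF letters_commute, of i j e e' w] Cons.prems l by simp
  also have "\<dots> \<approx> l # w @ [(i, e)]" using Cons by (auto intro: word_equiv_Cons)
  finally show ?case by simp
qed

lemma transl_word_cong: "(\<And>j. j \<in> {1..N} \<Longrightarrow> c j = c' j) \<Longrightarrow> transl_word c = transl_word c'"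
  unfolding transl_word_def by (intro arg_cong[where f=concat] map_cong) auto

lemma transl_word_zero [simp]: "transl_word (\<lambda>_. 0) = []"
  by (simp add: transl_word_def)

lemma transl_word_letters: "set (map fst (transl_word c)) \<subseteq> {1..N}"
proof -
  have "set (map fst (transl_word c)) \<subseteq> set [1..<N+1]"
    unfolding transl_word_def by (rule letters_concat_map) (rule gen_power_letters)
  then show ?thesis by auto
qed

lemma transl_word_split:
  assumes "i \<in> {1..N}"
  shows "transl_word c = concat (map (\<lambda>j. gen_power j (c j)) [1..<i]) @ gen_power i (c i)
    @ concat (map (\<lambda>j. gen_power j (c j)) [i+1..<N+1])"
proof -
  have "[1..<N+1] = [1..<i] @ i # [i+1..<N+1]"
    using assms upt_add_eq_append[of 1 i "N + 1 - i"] by (auto simp: upt_conv_Cons)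
  then show ?thesis by (simp add: transl_word_def)
qed

lemma transl_word_unit:
  assumes "i \<in> {1..N}"
  shows "transl_word (\<lambda>j. if j = i then letter_sign e else 0) = [(i, e)]"
proof -
  let ?c = "\<lambda>j. if j = i then letter_sign e else 0"
  have P: "concat (map (\<lambda>j. gen_power j (?c j)) [1..<i]) = []"
    and Q: "concat (map (\<lambda>j. gen_power j (?c j)) [i+1..<N+1]) = []"
    by (auto simp del: upt_Suc)
  show ?thesis unfolding transl_word_split[OF assms, of ?c] P Q by (simp add: gen_power_unit)
qed

lemma letter_transl_word:
  assumes i: "i \<in> {1..N}"
  shows "(i, e) # transl_word c \<approx> transl_word (c(i := c i + letter_sign e))"
proof -
  define c' where "c' = c(i := c i + letter_sign e)"
  define P where "P = concat (map (\<lambda>j. gen_power j (c j)) [1..<i])"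
  define Q where "Q = concat (map (\<lambda>j. gen_power j (c j)) [i+1..<N+1])"
  have "P = concat (map (\<lambda>j. gen_power j (c' j)) [1..<i])"
    and "Q = concat (map (\<lambda>j. gen_power j (c' j)) [i+1..<N+1])"
    unfolding P_def Q_def c'_def by (auto intro!: arg_cong[where f=concat])
  then have c': "transl_word c' = P @ gen_power i (c i + letter_sign e) @ Q"
    using transl_word_split[OF i, of c'] by (simp add: c'_def)
  have "set (map fst P) \<subseteq> set [1..<i]"
    unfolding P_def by (rule letters_concat_map) (rule gen_power_letters)
  then have P: "set (map fst P) \<subseteq> {1..N}" using i by auto
  have "(i, e) # transl_word c = ((i, e) # P) @ gen_power i (c i) @ Q"
    using transl_word_split[OF i] by (simp add: P_def Q_def)
  also have "\<dots> \<approx> P @ ((i, e) # gen_power i (c i)) @ Q"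
    using word_equiv_append_right[OF letter_commutes_word[OF i P]] by simp
  also have "\<dots> \<approx> P @ gen_power i (c i + letter_sign e) @ Q"
    by (rule word_equiv_append_cong[OF word_equiv_letter_gen_power])
  finally show ?thesis using c' by (simp add: c'_def)
qed

lemma append_transl_word:
  "set (map fst w) \<subseteq> {1..N} \<Longrightarrow> w @ transl_word c \<approx> transl_word (\<lambda>j. c j + exp_sum w j)"
proof (induction w arbitrary: c)
  case Nil
  then show ?case by (simp add: word_equiv.refl)
next
  case (Cons l w)
  obtain i e where l: "l = (i, e)" by (cases l)
  have i: "i \<in> {1..N}" using Cons.prems l by auto
  have "l # w @ transl_word c \<approx> l # transl_word (\<lambda>j. c j + exp_sum w j)"
    using Cons by (auto intro: word_equiv_Cons)
  also have "\<dots> \<approx> transl_word (\<lambda>j. c j + exp_sum (l # w) j)"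
    using letter_transl_word[OF i, of e "\<lambda>j. c j + exp_sum w j"] l
    by (simp add: fun_upd_def algebra_simps if_distrib cong: if_cong)
  finally show ?case by simp
qed

lemma exp_sum_transl_word: "j \<in> {1..N} \<Longrightarrow> exp_sum (transl_word c) j = c j"
proof -
  have "exp_sum (concat (map f js)) j = (\<Sum>x\<leftarrow>js. exp_sum (f x) j)" for f :: "nat \<Rightarrow> nat word" and js
    by (induction js) (auto simp: exp_sum_append)
  moreover assume "j \<in> {1..N}"
  ultimately show ?thesis
    by (simp add: transl_word_def exp_sum_gen_power sum_list_distinct_conv_sum_set del: upt_Suc)
qed

lemma transl_word_append: "transl_word c @ transl_word c' \<approx> transl_word (\<lambda>j. c j + c' j)"
proof -
  have "transl_word c @ transl_word c' \<approx> transl_word (\<lambda>j. c' j + exp_sum (transl_word c) j)"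
    by (rule append_transl_word[OF transl_word_letters])
  also have "transl_word (\<lambda>j. c' j + exp_sum (transl_word c) j) = transl_word (\<lambda>j. c j + c' j)"
    by (rule transl_word_cong) (simp add: exp_sum_transl_word)
  finally show ?thesis .
qed

lemma conj_gen:
  assumes "i \<in> {1..N}"
  shows "[(0, False), (i, False)] \<approx> transl_word (M i) @ [(0, False)]"
proof -
  have "[(0, False), (i, False)] \<approx> [(0, False), (i, False), (0, True), (0, False)]"
    using word_equiv_cancel_inv_gen[of _ "[(0, False), (i, False)]" 0 "[]"] by (simp add: word_equiv.sym)
  also have "\<dots> \<approx> transl_word (M i) @ [(0, False)]"
    using word_equiv.rel[OF conj_relation[OF assms], of "[]" "[(0, False)]"] by simp
  finally show ?thesis .
qed

lemma conj_inv_gen: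
  assumes "i \<in> {1..N}"
  shows "[(0, False), (i, True)] \<approx> transl_word (\<lambda>j. - M i j) @ [(0, False)]"
proof -
  let ?T = "transl_word (\<lambda>j. - M i j)"
  have cancel: "?T @ transl_word (M i) \<approx> []"
    using transl_word_append[of "\<lambda>j. - M i j" "M i"] by simp
  have "[(0, False), (i, True)] \<approx> ?T @ transl_word (M i) @ [(0, False), (i, True)]"
    using word_equiv.sym[OF word_equiv_append_right[OF cancel, of "[(0, False), (i, True)]"]] by simp
  also have "\<dots> \<approx> ?T @ [(0, False), (i, False), (0, True)] @ [(0, False), (i, True)]"
    using word_equiv.sym[OF word_equiv.rel[OF conj_relation[OF assms], of ?T "[(0, False), (i, True)]"]]
    by simp
  also have "\<dots> \<approx> ?T @ [(0, False), (i, False), (i, True)]"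
    using word_equiv_cancel_inv_gen[of _ "?T @ [(0, False), (i, False)]" 0 "[(i, True)]"] by simp
  also have "\<dots> \<approx> ?T @ [(0, False)]"
    using word_equiv_cancel_gen_inv[of _ "?T @ [(0, False)]" i "[]"] by simp
  finally show ?thesis .
qed

lemma conj_letter:
  "i \<in> {1..N} \<Longrightarrow> [(0, False), (i, e)] \<approx> transl_word (\<lambda>j. letter_sign e * M i j) @ [(0, False)]"
  by (cases e) (simp_all add: letter_sign_def conj_gen conj_inv_gen)

lemma row_mult_cong: "(\<And>j. j \<in> {1..N} \<Longrightarrow> c j = c' j) \<Longrightarrow> row_mult c = row_mult c'"
  unfolding row_mult_def by (intro ext sum.cong) auto

lemma row_mult_upd:
  assumes "i \<in> {1..N}"
  shows "row_mult (c(i := c i + s)) j = row_mult c j + s * M i j"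
proof -
  have "row_mult (c(i := c i + s)) j = (\<Sum>k=1..N. c k * M k j + (if k = i then s * M i j else 0))"
    unfolding row_mult_def by (intro sum.cong) (auto simp: algebra_simps)
  also have "\<dots> = row_mult c j + s * M i j" using assms by (simp add: sum.distrib row_mult_def)
  finally show ?thesis .
qed

lemma conj_word:
  "set (map fst w) \<subseteq> {1..N} \<Longrightarrow> (0, False) # w \<approx> transl_word (row_mult (exp_sum w)) @ [(0, False)]"
proof (induction w)
  case Nil
  have "row_mult (exp_sum []) = (\<lambda>_. 0)" by (simp add: row_mult_def)
  then show ?case by (simp add: word_equiv.refl)
next
  case (Cons l w)
  obtain i e where l: "l = (i, e)" by (cases l)
  have i: "i \<in> {1..N}" using Cons.prems l by auto
  have "(0, False) # l # w \<approx> transl_word (\<lambda>j. letter_sign e * M i j) @ [(0, False)] @ w"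
    using word_equiv_append_right[OF conj_letter[OF i, of e], of w] l by simp
  also have "\<dots> \<approx> transl_word (\<lambda>j. letter_sign e * M i j) @ transl_word (row_mult (exp_sum w)) @ [(0, False)]"
    using Cons by (auto intro: word_equiv_append_left)
  also have "\<dots> \<approx> transl_word (\<lambda>j. letter_sign e * M i j + row_mult (exp_sum w) j) @ [(0, False)]"
    using word_equiv_append_right[OF transl_word_append] by simp
  also have "transl_word (\<lambda>j. letter_sign e * M i j + row_mult (exp_sum w) j) = transl_word (row_mult (exp_sum (l # w)))"
    using l row_mult_upd[OF i] by (intro transl_word_cong) (simp add: algebra_simps)
  finally show ?case .
qed

lemma conj_transl_word: "(0, False) # transl_word c \<approx> transl_word (row_mult c) @ [(0, False)]"
proof -
  have "row_mult (exp_sum (transl_word c)) = row_mult c"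
    by (rule row_mult_cong) (simp add: exp_sum_transl_word)
  then show ?thesis using conj_word[OF transl_word_letters, of c] by simp
qed

lemma transl_word_conj_inv: "transl_word c @ [(0, True)] \<approx> (0, True) # transl_word (row_mult c)"
proof -
  have "transl_word c @ [(0, True)] \<approx> (0, True) # (0, False) # transl_word c @ [(0, True)]"
    using word_equiv_cancel_inv_gen[of _ "[]" 0 "transl_word c @ [(0, True)]"] by (simp add: word_equiv.sym)
  also have "\<dots> \<approx> (0, True) # transl_word (row_mult c) @ [(0, False), (0, True)]"
    using word_equiv_append_cong[OF conj_transl_word[of c], of "[(0, True)]" "[(0, True)]"] by simp
  also have "\<dots> \<approx> (0, True) # transl_word (row_mult c)"
    using word_equiv_cancel_gen_inv[of _ "(0, True) # transl_word (row_mult c)" 0 "[]"] by simp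
  finally show ?thesis .
qed

lemma transl_word_conj_inv_pow:
  "transl_word c @ replicate p (0, True) \<approx> replicate p (0, True) @ transl_word ((row_mult ^^ p) c)"
proof (induction p arbitrary: c)
  case 0
  then show ?case by (simp add: word_equiv.refl)
next
  case (Suc p)
  have "transl_word c @ replicate (Suc p) (0, True) \<approx> (0, True) # transl_word (row_mult c) @ replicate p (0, True)"
    using word_equiv_append_right[OF transl_word_conj_inv, of c "replicate p (0, True)"] by simp
  also have "\<dots> \<approx> (0, True) # replicate p (0, True) @ transl_word ((row_mult ^^ p) (row_mult c))"
    using word_equiv_Cons[OF Suc.IH] by simp
  finally show ?case by (simp add: funpow_swap1)
qed

lemma conj_pow_transl_word:
  "replicate d (0, False) @ transl_word c \<approx> transl_word ((row_mult ^^ d) c) @ replicate d (0, False)"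
proof (induction d arbitrary: c)
  case 0
  then show ?case by (simp add: word_equiv.refl)
next
  case (Suc d)
  have "replicate (Suc d) (0, False) @ transl_word c \<approx> (0, False) # transl_word ((row_mult ^^ d) c) @ replicate d (0, False)"
    using word_equiv_Cons[OF Suc.IH] by simp
  also have "\<dots> \<approx> transl_word ((row_mult ^^ Suc d) c) @ replicate (Suc d) (0, False)"
    using word_equiv_append_right[OF conj_transl_word, of "(row_mult ^^ d) c" "replicate d (0, False)"] by simp
  finally show ?case .
qed

lemma normal_word_shift: "normal_word p c q \<approx> normal_word (p + d) ((row_mult ^^ d) c) (d + q)"
proof -
  have cancel: "replicate d (0, True) @ replicate d (0, False) \<approx> []"
  proof (induction d)
    case (Suc d)
    have "replicate (Suc d) (0, True) @ replicate (Suc d) (0, False)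
        = replicate d (0, True) @ (0, True) # (0, False) # replicate d (0, False)"
      by (simp add: replicate_append_same)
    also have "\<dots> \<approx> replicate d (0, True) @ replicate d (0, False)"
      by (rule word_equiv_cancel_inv_gen)
    finally show ?case using Suc.IH by (rule word_equiv.trans)
  qed (simp add: word_equiv.refl)
  have "transl_word c \<approx> replicate d (0, True) @ replicate d (0, False) @ transl_word c"
    using word_equiv.sym[OF word_equiv_append_right[OF cancel, of "transl_word c"]] by simp
  also have "\<dots> \<approx> replicate d (0, True) @ transl_word ((row_mult ^^ d) c) @ replicate d (0, False)"
    by (rule word_equiv_append_left[OF conj_pow_transl_word])
  finally show ?thesis
    unfolding normal_word_def
    using word_equiv_append_cong[of _ _ _ "replicate p (0, True)" "replicate q (0, False)"]
    by (fastforce simp: replicate_add)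
qed

lemma transl_letter_normal_word:
  assumes "i \<in> {1..N}"
  shows "(i, e) # normal_word p c q
    \<approx> normal_word p (\<lambda>j. (row_mult ^^ p) (\<lambda>j. if j = i then letter_sign e else 0) j + c j) q"
proof -
  let ?unit = "\<lambda>j. if j = i then letter_sign e else 0"
  have "(i, e) # normal_word p c q
      = (transl_word ?unit @ replicate p (0, True)) @ transl_word c @ replicate q (0, False)"
    using transl_word_unit[OF assms] by (simp add: normal_word_def)
  also have "\<dots> \<approx> (replicate p (0, True) @ transl_word ((row_mult ^^ p) ?unit)) @ transl_word c @ replicate q (0, False)"
    by (rule word_equiv_append_right[OF transl_word_conj_inv_pow])
  also have "\<dots> \<approx> normal_word p (\<lambda>j. (row_mult ^^ p) ?unit j + c j) q"
    using word_equiv_append_cong[OF transl_word_append, of "replicate p (0, True)" _ c "replicate q (0, False)"]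
    by (simp add: normal_word_def)
  finally show ?thesis .
qed

lemma normal_word_exists: "set (map fst u) \<subseteq> {0..N} \<Longrightarrow> \<exists>p c q. u \<approx> normal_word p c q"
proof (induction u)
  case Nil
  have "normal_word 0 (\<lambda>_. 0) 0 = []" by (simp add: normal_word_def)
  then show ?case by (metis word_equiv.refl)
next
  case (Cons l u)
  obtain i e where l: "l = (i, e)" by (cases l)
  from Cons obtain p c q where "u \<approx> normal_word p c q" by auto
  then have lu: "l # u \<approx> l # normal_word p c q" by (rule word_equiv_Cons)
  consider "i = 0" "e" | "i = 0" "\<not> e" "p > 0" | "i = 0" "\<not> e" "p = 0" | "i \<in> {1..N}"
    using Cons.prems l by fastforce
  then show ?case
  proof cases
    case 1
    then have "l # normal_word p c q = normal_word (Suc p) c q" by (simp add: l normal_word_def)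
    then show ?thesis using lu by auto
  next
    case 2
    then obtain p' where "p = Suc p'" using gr0_conv_Suc by blast
    then have "l # normal_word p c q \<approx> normal_word p' c q"
      using 2 word_equiv_cancel_gen_inv[of _ "[]" 0 "normal_word p' c q"] by (simp add: l normal_word_def)
    then show ?thesis using word_equiv.trans[OF lu] by blast
  next
    case 3
    then have "l # normal_word p c q \<approx> normal_word 0 (row_mult c) (Suc q)"
      using word_equiv_append_right[OF conj_transl_word, of c "replicate q (0, False)"]
      by (simp add: l normal_word_def)
    then show ?thesis using word_equiv.trans[OF lu] by blast
  next
    case 4
    then have "l # normal_word p c q
        \<approx> normal_word p (\<lambda>j. (row_mult ^^ p) (\<lambda>j. if j = i then letter_sign e else 0) j + c j) q"
      using transl_letter_normal_word l by simp
    then show ?thesis using word_equiv.trans[OF lu] by blast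
  qed
qed

end

section \<open>The group G_M\<close>

text \<open>The dimension N = 2n+1 is a parameter so that the simplifier does not rewrite it to Suc (2n).\<close>

locale GM_setting =
  fixes n N :: nat and M :: "nat \<Rightarrow> nat \<Rightarrow> int" and \<alpha> :: real
    and a :: "nat \<Rightarrow> real" and b :: "nat \<Rightarrow> nat \<Rightarrow> complex" and R :: "nat \<Rightarrow> nat \<Rightarrow> complex"
  assumes N: "N = 2*n+1" and n: "n \<ge> 1"
    and real_eig: "{l. is_eigenvalue N (cmat M) l \<and> Im l = 0} = {complex_of_real \<alpha>}"
    and alpha_pos: "\<alpha> > 0" and alpha_ne1: "\<alpha> \<noteq> 1"
    and a_supp: "supp_vec N a" and a_nonzero: "a \<noteq> (\<lambda>_. 0)"
    and a_eig: "matvec N (\<lambda>i j. real_of_int (M i j)) a = (\<lambda>i. \<alpha> * a i)"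
    and b_basis: "is_basis_of n b (upper_gen_space N (cmat M))"
    and R_def: "\<forall>j\<in>{1..n}. matvec N (cmat M) (b j) = (\<lambda>i. \<Sum>l=1..n. R l j * b l i)"
begin

sublocale GM_words N M .

definition upper_eigs :: "complex set" where
  "upper_eigs = {l. is_eigenvalue N (cmat M) l \<and> Im l > 0}"

lemma cmat_real: "cnj (cmat M i j) = cmat M i j"
  by (simp add: cmat_def)

lemma b_in_upper_eigs_sum: "j \<in> {1..n} \<Longrightarrow> b j \<in> gen_eigen_sum N (cmat M) upper_eigs"
  using b_basis by (simp add: is_basis_of_def upper_gen_space_eq_gen_eigen_sum upper_eigs_def)

lemma b_independent: "(\<lambda>i. \<Sum>j=1..n. c j * b j i) = (\<lambda>_. 0) \<Longrightarrow> \<forall>j\<in>{1..n}. c j = 0"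
  using b_basis by (simp add: is_basis_of_def)

lemma supp_b: "j \<in> {1..n} \<Longrightarrow> supp_vec N (b j)"
  using b_in_upper_eigs_sum supp_vec_gen_eigen_sum by blast

text \<open>A sum over an infinite set is 0 in Isabelle, so infinitely many eigenvalues would force W = 0.\<close>

lemma finite_upper_eigs: "finite upper_eigs"
proof (rule ccontr)
  assume "infinite upper_eigs"
  then have "b j = (\<lambda>_. 0)" if "j \<in> {1..n}" for j
    using b_in_upper_eigs_sum[OF that] by (auto simp: gen_eigen_sum_def)
  then have "(\<lambda>i. \<Sum>j=1..n. 1 * b j i) = (\<lambda>_. 0)" by simp
  with b_independent n show False by fastforce
qed

lemma a_gen_eigenspace: "(\<lambda>i. complex_of_real (a i)) \<in> gen_eigenspace N (cmat M) \<alpha>"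
proof -
  have eigen: "minus_diag N (cmat M) \<alpha> (\<lambda>i. complex_of_real (a i)) = (\<lambda>_. 0)"
  proof
    fix i
    have "matvec N (cmat M) (\<lambda>i. complex_of_real (a i)) i
        = complex_of_real (matvec N (\<lambda>i j. real_of_int (M i j)) a i)"
      by (simp add: matvec_def cmat_def)
    then show "minus_diag N (cmat M) \<alpha> (\<lambda>i. complex_of_real (a i)) i = 0"
      using fun_cong[OF a_eig, of i] by (simp add: minus_diag_def)
  qed
  have N_Suc: "Suc (2*n) = N" using N by simp
  have "(minus_diag N (cmat M) \<alpha> ^^ Suc (2*n)) (\<lambda>i. complex_of_real (a i)) = (\<lambda>_. 0)"
    by (simp only: funpow_Suc_right o_apply eigen minus_diag_pow_zero)
  then have "(minus_diag N (cmat M) \<alpha> ^^ N) (\<lambda>i. complex_of_real (a i)) = (\<lambda>_. 0)"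
    by (simp only: N_Suc)
  with a_supp show ?thesis by (simp add: gen_eigenspace_minus_diag supp_vec_def)
qed

lemma eigenvectors_independent:
  assumes "(\<lambda>i. x0 * complex_of_real (a i) + (\<Sum>j=1..n. x j * b j i) + (\<Sum>j=1..n. y j * cnj (b j i))) = (\<lambda>_. 0)"
  shows "x0 = 0 \<and> (\<forall>j\<in>{1..n}. x j = 0 \<and> y j = 0)"
proof -
  let ?\<Sigma> = "gen_eigen_sum N (cmat M)"
  define u where "u = (\<lambda>i. x0 * complex_of_real (a i))"
  define v where "v = (\<lambda>i. \<Sum>j=1..n. x j * b j i)"
  define v' where "v' = (\<lambda>i. \<Sum>j=1..n. cnj (y j) * b j i)"
  have fin: "finite upper_eigs" "finite (cnj ` upper_eigs)" using finite_upper_eigs by auto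
  have "gen_eigenspace N (cmat M) \<alpha> \<subseteq> ?\<Sigma> {complex_of_real \<alpha>}"
    by (rule gen_eigenspace_subset_gen_eigen_sum) auto
  then have u: "u \<in> ?\<Sigma> {complex_of_real \<alpha>}"
    using gen_eigenspace_scale[OF a_gen_eigenspace] by (auto simp: u_def)
  have v: "v \<in> ?\<Sigma> upper_eigs" and v': "v' \<in> ?\<Sigma> upper_eigs"
    unfolding v_def v'_def by (auto intro!: gen_eigen_sum_sum gen_eigen_sum_scale b_in_upper_eigs_sum)
  have cv': "(\<lambda>i. cnj (v' i)) \<in> ?\<Sigma> (cnj ` upper_eigs)"
    by (rule cnj_gen_eigen_sum[OF cmat_real v'])
  have disj: "upper_eigs \<inter> cnj ` upper_eigs = {}"
    and disj_\<alpha>: "{complex_of_real \<alpha>} \<inter> (upper_eigs \<union> cnj ` upper_eigs) = {}"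
    by (auto simp: upper_eigs_def complex_eq_iff)
  have vv': "(\<lambda>i. v i + cnj (v' i)) \<in> ?\<Sigma> (upper_eigs \<union> cnj ` upper_eigs)"
    by (rule gen_eigen_sum_union[OF fin disj v cv'])
  have "(\<lambda>i. u i + (v i + cnj (v' i))) = (\<lambda>_. 0)"
    using assms by (simp add: u_def v_def v'_def add.assoc)
  then have u0: "u = (\<lambda>_. 0)"
    using gen_eigen_sum_direct[OF _ _ disj_\<alpha> u vv'] fin by simp
  then have x0: "x0 = 0" using a_nonzero by (auto simp: u_def fun_eq_iff)
  have vv'0: "(\<lambda>i. v i + cnj (v' i)) = (\<lambda>_. 0)"
    using \<open>(\<lambda>i. u i + _) = _\<close> u0 by (simp add: fun_eq_iff)
  then have "v = (\<lambda>_. 0)" by (rule gen_eigen_sum_direct[OF fin disj v cv'])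
  then have "\<forall>j\<in>{1..n}. x j = 0" by (intro b_independent) (simp add: v_def)
  moreover have "(\<lambda>i. cnj (v' i)) = (\<lambda>_. 0)"
    using gen_eigen_sum_direct[OF fin(2,1) _ cv' v] disj vv'0 by (auto simp: add.commute)
  then have "v' = (\<lambda>_. 0)" by (simp add: fun_eq_iff)
  then have "\<forall>j\<in>{1..n}. cnj (y j) = 0"
    by (intro b_independent) (simp add: v'_def)
  ultimately show ?thesis using x0 by simp
qed

definition eigen_col :: "nat \<Rightarrow> nat \<Rightarrow> complex" where
  "eigen_col k i =
     (if k = 1 then complex_of_real (a i) else if k \<le> n+1 then b (k-1) i else cnj (b (k-n-1) i))"

lemma mat_injective_eigen_cols: "mat_injective N (\<lambda>i k. eigen_col k i)"
  unfolding mat_injective_def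
proof (intro allI impI)
  fix x assume x: "\<forall>i\<in>{1..N}. (\<Sum>k=1..N. eigen_col k i * x k) = 0"
  have "(\<lambda>i. x 1 * complex_of_real (a i) + (\<Sum>j=1..n. x (j+1) * b j i)
      + (\<Sum>j=1..n. x (j+n+1) * cnj (b j i))) = (\<lambda>_. 0)"
  proof
    fix i
    show "x 1 * complex_of_real (a i) + (\<Sum>j=1..n. x (j+1) * b j i) + (\<Sum>j=1..n. x (j+n+1) * cnj (b j i)) = 0"
    proof (cases "i \<in> {1..N}")
      case True
      with x N have "(\<Sum>k=1..2*n+1. eigen_col k i * x k) = 0" by simp
      then show ?thesis
        by (subst (asm) sum_atLeast1_atMost_split3) (simp add: eigen_col_def mult.commute)
    next
      case False
      then show ?thesis using a_supp supp_b by (simp add: supp_vec_def)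
    qed
  qed
  note indep = eigenvectors_independent[OF this]
  show "\<forall>k\<in>{1..N}. x k = 0"
  proof
    fix k assume "k \<in> {1..N}"
    with N have "k \<in> {1..2*n+1}" by simp
    then show "x k = 0"
      by (rule atLeast1_atMost_split3_cases[where P="\<lambda>k. x k = 0"]) (use indep in auto)
  qed
qed

text \<open>Transposing the invertible matrix with columns a, b_j and conj b_j.\<close>

lemma real_annihilator_zero:
  fixes d :: "nat \<Rightarrow> real"
  assumes da: "(\<Sum>k=1..N. d k * a k) = 0"
    and db: "\<forall>j\<in>{1..n}. (\<Sum>k=1..N. complex_of_real (d k) * b j k) = 0"
  shows "\<forall>k\<in>{1..N}. d k = 0"
proof -
  have inj: "mat_injective N eigen_col"
    using mat_injective_transpose[of N "\<lambda>i k. eigen_col k i"] mat_injective_eigen_cols by simp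
  have "(\<Sum>i=1..N. eigen_col k i * complex_of_real (d i)) = 0" if "k \<in> {1..N}" for k
  proof -
    from that N have "k \<in> {1..2*n+1}" by simp
    then show ?thesis
    proof (rule atLeast1_atMost_split3_cases[where P="\<lambda>k. (\<Sum>i=1..N. eigen_col k i * complex_of_real (d i)) = 0"])
      have "complex_of_real (\<Sum>i=1..N. d i * a i) = 0" using da by simp
      then show "(\<Sum>i=1..N. eigen_col 1 i * complex_of_real (d i)) = 0"
        by (simp add: eigen_col_def mult.commute)
    next
      fix j assume j: "j \<in> {1..n}"
      then show "(\<Sum>i=1..N. eigen_col (j+1) i * complex_of_real (d i)) = 0"
        using db by (simp add: eigen_col_def mult.commute)
      have "(\<Sum>i=1..N. eigen_col (j+n+1) i * complex_of_real (d i))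
          = cnj (\<Sum>i=1..N. complex_of_real (d i) * b j i)"
        using j by (simp add: eigen_col_def mult.commute)
      with j db show "(\<Sum>i=1..N. eigen_col (j+n+1) i * complex_of_real (d i)) = 0" by simp
    qed
  qed
  then have "\<forall>k\<in>{1..N}. (\<Sum>i=1..N. eigen_col k i * complex_of_real (d i)) = 0" by blast
  with inj have "\<forall>k\<in>{1..N}. complex_of_real (d k) = 0" by (rule mat_injectiveD)
  then show ?thesis by simp
qed

lemma R_mat_injective: "mat_injective n R"
  unfolding mat_injective_def
proof (intro allI impI)
  fix c assume c: "\<forall>l\<in>{1..n}. (\<Sum>j=1..n. R l j * c j) = 0"
  define v where "v = (\<lambda>i. \<Sum>j=1..n. c j * b j i)"
  have Mv: "matvec N (cmat M) v = (\<lambda>i. 0 * v i)"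
  proof
    fix i
    have "matvec N (cmat M) v i = (\<Sum>j=1..n. c j * matvec N (cmat M) (b j) i)"
      by (simp add: v_def matvec_sum matvec_scale)
    also have "\<dots> = (\<Sum>j=1..n. c j * (\<Sum>l=1..n. R l j * b l i))"
      using R_def by (intro sum.cong) auto
    also have "\<dots> = (\<Sum>j=1..n. \<Sum>l=1..n. R l j * c j * b l i)"
      by (simp add: sum_distrib_left mult_ac)
    also have "\<dots> = (\<Sum>l=1..n. (\<Sum>j=1..n. R l j * c j) * b l i)"
      by (subst sum.swap) (simp add: sum_distrib_right)
    also have "\<dots> = 0" using c by simp
    finally show "matvec N (cmat M) v i = 0 * v i" by simp
  qed
  have "v = (\<lambda>_. 0)"
  proof (rule ccontr)
    assume "v \<noteq> (\<lambda>_. 0)"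
    moreover have "supp_vec N v" using supp_b by (auto simp: v_def supp_vec_def)
    ultimately have "is_eigenvalue N (cmat M) 0"
      unfolding is_eigenvalue_def using Mv by (intro exI[of _ v]) simp
    then have "(0::complex) \<in> {l. is_eigenvalue N (cmat M) l \<and> Im l = 0}" by simp
    with real_eig alpha_pos show False by simp
  qed
  then show "\<forall>j\<in>{1..n}. c j = 0" by (intro b_independent) (simp add: v_def)
qed

text \<open>In the notation of the paper, g_0(w, z) = (alpha w, RT_mult z), and b_col k is the
  C^n-component of the translation vector u_k.\<close>

definition RT_mult :: "(nat \<Rightarrow> complex) \<Rightarrow> nat \<Rightarrow> complex" where
  "RT_mult = matvec n (\<lambda>i j. R j i)"

definition RT_inv :: "(nat \<Rightarrow> complex) \<Rightarrow> nat \<Rightarrow> complex" where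
  "RT_inv = inv_into {z. supp_vec n z} RT_mult"

lemma RT_mult_bij: "bij_betw RT_mult {z. supp_vec n z} {z. supp_vec n z}"
  unfolding RT_mult_def
  by (rule matvec_bij_betw) (rule mat_injective_transpose[THEN iffD2, OF R_mat_injective])

lemma RT_inv: "supp_vec n z \<Longrightarrow> supp_vec n (RT_inv z) \<and> RT_mult (RT_inv z) = z"
  using bij_betw_imp_surj_on[OF RT_mult_bij]
  by (metis RT_inv_def f_inv_into_f inv_into_into mem_Collect_eq)

lemma RT_inv_RT_mult: "supp_vec n z \<Longrightarrow> RT_inv (RT_mult z) = z"
  using bij_betw_inv_into_left[OF RT_mult_bij] by (simp add: RT_inv_def)

definition b_col :: "nat \<Rightarrow> nat \<Rightarrow> complex" where
  "b_col k = (\<lambda>j. if j \<in> {1..n} then b j k else 0)"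

definition letter_act :: "nat \<times> bool \<Rightarrow> complex \<times> (nat \<Rightarrow> complex) \<Rightarrow> complex \<times> (nat \<Rightarrow> complex)" where
  "letter_act l p = (case l of (k, e) \<Rightarrow> case p of (w, z) \<Rightarrow>
     if k = 0 then (if e then (w / complex_of_real \<alpha>, RT_inv z) else (complex_of_real \<alpha> * w, RT_mult z))
     else (w + of_int (letter_sign e) * complex_of_real (a k), \<lambda>j. z j + of_int (letter_sign e) * b_col k j))"

lemma letter_act_simps:
  "letter_act (0, False) (w, z) = (complex_of_real \<alpha> * w, RT_mult z)"
  "letter_act (0, True) (w, z) = (w / complex_of_real \<alpha>, RT_inv z)"
  "k \<noteq> 0 \<Longrightarrow> letter_act (k, e) (w, z)
     = (w + of_int (letter_sign e) * complex_of_real (a k), \<lambda>j. z j + of_int (letter_sign e) * b_col k j)"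
  by (simp_all add: letter_act_def)

lemma HC_dom_iff: "(w, z) \<in> HC_dom n \<longleftrightarrow> Im w > 0 \<and> supp_vec n z"
  by (simp add: HC_dom_def)

lemma letter_act_closed:
  assumes "p \<in> HC_dom n"
  shows "letter_act l p \<in> HC_dom n"
proof -
  obtain w z k e where p: "p = (w, z)" and l: "l = (k, e)" by (cases p; cases l)
  have "Im w > 0" "supp_vec n z" using assms p by (auto simp: HC_dom_iff)
  then show ?thesis
    using alpha_pos RT_inv[of z] supp_vec_matvec[of n "\<lambda>i j. R j i" z]
    by (cases "k = 0"; cases e)
      (auto simp: p l letter_act_simps HC_dom_iff RT_mult_def supp_vec_def b_col_def)
qed

lemma letter_act_inverse:
  assumes "p \<in> HC_dom n"
  shows "letter_act (k, \<not> e) (letter_act (k, e) p) = p"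
proof -
  obtain w z where p: "p = (w, z)" by (cases p)
  have z: "supp_vec n z" using assms p by (simp add: HC_dom_iff)
  show ?thesis
  proof (cases "k = 0")
    case True
    then show ?thesis
      using alpha_pos RT_inv[OF z] RT_inv_RT_mult[OF z] by (cases e) (simp_all add: p letter_act_simps)
  next
    case False
    then show ?thesis by (cases e) (simp_all add: p letter_act_simps letter_sign_def)
  qed
qed

lemma GM_gen_eq: "GM_gen n \<alpha> a b R k = (\<lambda>p\<in>HC_dom n. letter_act (k, False) p)"
  unfolding GM_gen_def
proof (rule restrict_ext)
  fix p :: "complex \<times> (nat \<Rightarrow> complex)"
  obtain w z where "p = (w, z)" by (cases p)
  then show "(case p of (w, z) \<Rightarrow> if k = 0 then (complex_of_real \<alpha> * w, \<lambda>j. if j \<in> {1..n} then \<Sum>l=1..n. R l j * z l else 0)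
        else (w + complex_of_real (a k), \<lambda>j. z j + (if j \<in> {1..n} then b j k else 0))) = letter_act (k, False) p"
    by (cases "k = 0") (simp_all add: letter_act_simps RT_mult_def matvec_def b_col_def letter_sign_def)
qed

lemma GM_gen_Bij: "GM_gen n \<alpha> a b R k \<in> Bij (HC_dom n)"
proof -
  have "bij_betw (letter_act (k, False)) (HC_dom n) (HC_dom n)"
    using letter_act_inverse[of _ k True] letter_act_inverse[of _ k False] letter_act_closed
    by (intro bij_betw_byWitness[where f'="letter_act (k, True)"]) auto
  then have "bij_betw (GM_gen n \<alpha> a b R k) (HC_dom n) (HC_dom n)"
    by (rule bij_betw_cong[THEN iffD2, rotated]) (simp add: GM_gen_eq)
  then show ?thesis by (simp add: Bij_def GM_gen_eq)
qed

abbreviation GM :: "(complex \<times> (nat \<Rightarrow> complex) \<Rightarrow> complex \<times> (nat \<Rightarrow> complex)) monoid" where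
  "GM \<equiv> GM_group n \<alpha> a b R"

abbreviation gen :: "nat \<Rightarrow> complex \<times> (nat \<Rightarrow> complex) \<Rightarrow> complex \<times> (nat \<Rightarrow> complex)" where
  "gen \<equiv> GM_gen n \<alpha> a b R"

abbreviation gens_subgroup :: "(complex \<times> (nat \<Rightarrow> complex) \<Rightarrow> complex \<times> (nat \<Rightarrow> complex)) set" where
  "gens_subgroup \<equiv> generate (BijGroup (HC_dom n)) (gen ` {0..N})"

lemma subgroup_gens_subgroup: "subgroup gens_subgroup (BijGroup (HC_dom n))"
  using GM_gen_Bij by (intro group.generate_is_subgroup[OF group_BijGroup]) (auto simp: BijGroup_def)

lemma GM_eq: "GM = (BijGroup (HC_dom n))\<lparr>carrier := gens_subgroup\<rparr>"
  by (simp add: GM_group_def N)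

lemma group_GM: "group GM"
  unfolding GM_eq by (rule subgroup.subgroup_is_group[OF subgroup_gens_subgroup group_BijGroup])

lemma gen_in_carrier: "gen k \<in> carrier GM"
proof (cases "k \<le> N")
  case True
  then show ?thesis by (auto simp: GM_eq intro: generate.incl)
next
  case False
  then have "a k = 0" "b_col k = (\<lambda>_. 0)"
    using a_supp supp_b by (auto simp: supp_vec_def b_col_def)
  then have "gen k = \<one>\<^bsub>BijGroup (HC_dom n)\<^esub>"
    using False by (auto simp: GM_gen_eq BijGroup_def letter_act_def fun_eq_iff split: prod.splits)
  then show ?thesis by (simp add: GM_eq generate.one)
qed

lemma word_eval_GM_apply: "p \<in> HC_dom n \<Longrightarrow> word_eval GM gen w p = foldr letter_act w p"
  unfolding GM_eq
proof (rule word_eval_BijGroup_apply[where f=letter_act])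
  show "range gen \<subseteq> gens_subgroup" using gen_in_carrier by (auto simp: GM_eq)
  show "letter_act (k, True) p \<in> HC_dom n \<and> letter_act (k, False) (letter_act (k, True) p) = p"
    if "p \<in> HC_dom n" for k p
    using that letter_act_closed letter_act_inverse[of p k True] by simp
qed (simp_all only: subgroup_gens_subgroup GM_gen_eq)

lemma GM_eqI:
  assumes "x \<in> carrier GM" "y \<in> carrier GM" and "\<And>p. p \<in> HC_dom n \<Longrightarrow> x p = y p"
  shows "x = y"
proof -
  have "carrier GM \<subseteq> extensional (HC_dom n)"
    using subgroup.subset[OF subgroup_gens_subgroup] Bij_imp_extensional
    by (auto simp: GM_eq BijGroup_def)
  with assms show ?thesis by (auto intro: extensionalityI)
qed

lemma foldr_letter_act_gen_power:
  assumes "k \<noteq> 0"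
  shows "foldr letter_act (gen_power k m) (w, z)
    = (w + of_int m * complex_of_real (a k), \<lambda>j. z j + of_int m * b_col k j)"
proof -
  have "foldr letter_act (replicate t (k, e)) (w, z)
      = (w + of_int (letter_sign e * int t) * complex_of_real (a k), \<lambda>j. z j + of_int (letter_sign e * int t) * b_col k j)"
    for t e by (induction t) (auto simp: assms letter_act_simps algebra_simps)
  moreover have "of_int (letter_sign (m < 0)) * of_int \<bar>m\<bar> = (of_int m :: complex)"
    by (cases "m < 0") (simp_all add: letter_sign_def)
  ultimately show ?thesis by (simp add: gen_power_def)
qed

lemma foldr_letter_act_transl_word:
  "foldr letter_act (transl_word c) (w, z) = (w + (\<Sum>k=1..N. of_int (c k) * complex_of_real (a k)),
     \<lambda>j. z j + (\<Sum>k=1..N. of_int (c k) * b_col k j))"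
proof -
  have "foldr letter_act (concat (map (\<lambda>j. gen_power j (c j)) js)) (w, z)
      = (w + (\<Sum>k\<leftarrow>js. of_int (c k) * complex_of_real (a k)), \<lambda>j. z j + (\<Sum>k\<leftarrow>js. of_int (c k) * b_col k j))"
    if "0 \<notin> set js" for js
    using that by (induction js) (auto simp: foldr_letter_act_gen_power algebra_simps)
  from this[of "[1..<N+1]"] show ?thesis
    by (simp add: transl_word_def sum_list_distinct_conv_sum_set atLeastLessThanSuc_atLeastAtMost del: upt_Suc)
qed

lemma gens_in_carrier: "range gen \<subseteq> carrier GM"
  using gen_in_carrier by blast

lemma RT_mult_add: "RT_mult (\<lambda>j. u j + v j) = (\<lambda>j. RT_mult u j + RT_mult v j)"
  by (simp add: RT_mult_def matvec_add)

lemma RT_mult_b_col: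
  assumes "i \<in> {1..N}"
  shows "RT_mult (b_col i) j = (\<Sum>k=1..N. of_int (M i k) * b_col k j)"
proof (cases "j \<in> {1..n}")
  case True
  have "RT_mult (b_col i) j = (\<Sum>l=1..n. R l j * b l i)"
    using True by (simp add: RT_mult_def matvec_def b_col_def)
  also have "\<dots> = matvec N (cmat M) (b j) i" using R_def True by simp
  also have "\<dots> = (\<Sum>k=1..N. of_int (M i k) * b_col k j)"
    using True assms by (simp add: matvec_def cmat_def b_col_def)
  finally show ?thesis .
qed (auto simp: RT_mult_def matvec_def b_col_def)

lemma foldr_letter_act_conj:
  assumes i: "i \<in> {1..N}" and p: "p \<in> HC_dom n"
  shows "foldr letter_act [(0, False), (i, False), (0, True)] p = foldr letter_act (transl_word (M i)) p"
proof -
  obtain w z where pz: "p = (w, z)" by (cases p)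
  have z: "supp_vec n z" using p pz by (simp add: HC_dom_iff)
  have "(\<Sum>k=1..N. real_of_int (M i k) * a k) = \<alpha> * a i"
    using fun_cong[OF a_eig, of i] i by (simp add: matvec_def)
  from arg_cong[OF this, of complex_of_real]
  have a_row: "complex_of_real \<alpha> * complex_of_real (a i) = (\<Sum>k=1..N. of_int (M i k) * complex_of_real (a k))"
    by simp
  have "foldr letter_act [(0, False), (i, False), (0, True)] p
      = (w + complex_of_real \<alpha> * complex_of_real (a i), \<lambda>j. z j + RT_mult (b_col i) j)"
    using alpha_pos RT_inv[OF z] i by (simp add: pz letter_act_simps letter_sign_def RT_mult_add algebra_simps)
  also have "\<dots> = foldr letter_act (transl_word (M i)) p"
    by (simp add: pz foldr_letter_act_transl_word a_row RT_mult_b_col[OF i])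
  finally show ?thesis .
qed

lemma GM_relations_hold:
  assumes "(l, r) \<in> GM_relations N M"
  shows "word_eval GM gen l = word_eval GM gen r"
proof (rule GM_eqI)
  show "word_eval GM gen l \<in> carrier GM" "word_eval GM gen r \<in> carrier GM"
    by (simp_all add: group.word_eval_closed[OF group_GM gens_in_carrier])
  fix p assume p: "p \<in> HC_dom n"
  from assms consider (comm) i j where "i \<in> {1..N}" "j \<in> {1..N}"
      "l = [(i, False), (j, False)]" "r = [(j, False), (i, False)]"
    | (conj) i where "i \<in> {1..N}" "l = [(0, False), (i, False), (0, True)]" "r = transl_word (M i)"
    unfolding GM_relations_def transl_word_def by blast
  then have "foldr letter_act l p = foldr letter_act r p"
  proof cases
    case comm
    then show ?thesis by (cases p) (simp add: letter_act_simps algebra_simps)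
  next
    case conj
    then show ?thesis using foldr_letter_act_conj[OF conj(1) p] by simp
  qed
  with p show "word_eval GM gen l p = word_eval GM gen r p" by (simp add: word_eval_GM_apply)
qed

lemma foldr_letter_act_base_point:
  "foldr letter_act (transl_word c @ replicate q (0, False)) (\<i>, \<lambda>_. 0)
     = (complex_of_real (\<alpha> ^ q) * \<i> + complex_of_real (\<Sum>k=1..N. of_int (c k) * a k),
        \<lambda>j. \<Sum>k=1..N. of_int (c k) * b_col k j)"
proof -
  have "foldr letter_act (replicate q (0, False)) (\<i>, \<lambda>_. 0) = (complex_of_real \<alpha> ^ q * \<i>, \<lambda>_. 0)"
    by (induction q) (simp_all add: letter_act_simps RT_mult_def matvec_def fun_eq_iff)
  then show ?thesis by (simp add: foldr_letter_act_transl_word)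
qed

lemma normal_word_eval_inj:
  assumes eq: "word_eval GM gen (normal_word p c q) = word_eval GM gen (normal_word p c' q')"
  shows "normal_word p c q = normal_word p c' q'"
proof -
  interpret group GM by (rule group_GM)
  let ?eval = "word_eval GM gen"
  let ?u = "transl_word c @ replicate q (0, False)" and ?u' = "transl_word c' @ replicate q' (0, False)"
  have "?eval (replicate p (0, True)) \<otimes>\<^bsub>GM\<^esub> ?eval ?u = ?eval (replicate p (0, True)) \<otimes>\<^bsub>GM\<^esub> ?eval ?u'"
    using eq by (simp add: normal_word_def word_eval_append[OF gens_in_carrier])
  then have "?eval ?u = ?eval ?u'" by (simp add: word_eval_closed[OF gens_in_carrier])
  moreover have base: "(\<i>, (\<lambda>_. 0) :: nat \<Rightarrow> complex) \<in> HC_dom n" by (simp add: HC_dom_iff supp_vec_def)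
  ultimately have "foldr letter_act ?u (\<i>, \<lambda>_. 0) = foldr letter_act ?u' (\<i>, \<lambda>_. 0)"
    by (metis word_eval_GM_apply[OF base])
  then have w_eq: "complex_of_real (\<alpha> ^ q) * \<i> + complex_of_real (\<Sum>k=1..N. of_int (c k) * a k)
      = complex_of_real (\<alpha> ^ q') * \<i> + complex_of_real (\<Sum>k=1..N. of_int (c' k) * a k)"
    and z_eq: "(\<lambda>j. \<Sum>k=1..N. of_int (c k) * b_col k j) = (\<lambda>j. \<Sum>k=1..N. of_int (c' k) * b_col k j)"
    by (simp_all only: foldr_letter_act_base_point prod.inject)
  have "\<alpha> ^ q = \<alpha> ^ q'" using arg_cong[OF w_eq, of Im] by simp
  then have "q = q'" using power_inject_exp'[OF alpha_ne1 alpha_pos] by blast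
  define d where "d k = real_of_int (c k - c' k)" for k
  have "\<forall>k\<in>{1..N}. d k = 0"
  proof (rule real_annihilator_zero)
    show "(\<Sum>k=1..N. d k * a k) = 0"
      using arg_cong[OF w_eq, of Re] by (simp add: d_def left_diff_distrib sum_subtractf)
    show "\<forall>j\<in>{1..n}. (\<Sum>k=1..N. complex_of_real (d k) * b j k) = 0"
    proof
      fix j assume "j \<in> {1..n}"
      with fun_cong[OF z_eq, of j] show "(\<Sum>k=1..N. complex_of_real (d k) * b j k) = 0"
        by (simp add: d_def b_col_def left_diff_distrib sum_subtractf)
    qed
  qed
  then have "transl_word c = transl_word c'" by (intro transl_word_cong) (simp add: d_def)
  with \<open>q = q'\<close> show ?thesis by (simp add: normal_word_def)
qed

lemma word_equiv_if_eval_eq: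
  assumes u: "set (map fst u) \<subseteq> {0..N}" and v: "set (map fst v) \<subseteq> {0..N}"
    and eq: "word_eval GM gen u = word_eval GM gen v"
  shows "u \<approx> v"
proof -
  have eval_respects: "word_eval GM gen x = word_eval GM gen y" if "x \<approx> y" for x y
    using GM_relations_hold that
    by (intro group.word_eval_respects_word_equiv[OF group_GM gens_in_carrier]) auto
  have ordered: "x \<approx> y"
    if "x \<approx> normal_word p c q" "y \<approx> normal_word p' c' q'" "p \<le> p'"
      "word_eval GM gen x = word_eval GM gen y" for x y p c q p' c' q'
  proof -
    let ?shifted = "normal_word p' ((row_mult ^^ (p' - p)) c) (p' - p + q)"
    have shift: "normal_word p c q \<approx> ?shifted"
      using normal_word_shift[of p c q "p' - p"] \<open>p \<le> p'\<close> by simp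
    have "word_eval GM gen ?shifted = word_eval GM gen (normal_word p' c' q')"
      using eval_respects[OF that(1)] eval_respects[OF that(2)] eval_respects[OF shift] that(4) by simp
    then have "?shifted = normal_word p' c' q'" by (rule normal_word_eval_inj)
    then have "x \<approx> normal_word p' c' q'" using word_equiv.trans[OF that(1) shift] by simp
    then show ?thesis using word_equiv.sym[OF that(2)] by (rule word_equiv.trans)
  qed
  obtain p c q p' c' q' where "u \<approx> normal_word p c q" "v \<approx> normal_word p' c' q'"
    using normal_word_exists u v by meson
  then show ?thesis
    using ordered[of u p c q v p' c' q'] ordered[of v p' c' q' u p c q] eq
    by (cases "p \<le> p'") (auto intro: word_equiv.sym)
qed

theorem GM_has_presentation: "has_presentation GM {0..N} gen (GM_relations N M)"
  unfolding has_presentation_def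
proof (intro conjI allI impI)
  show "gen ` {0..N} \<subseteq> carrier GM" using gen_in_carrier by blast
  have "generate GM (gen ` {0..N}) = gens_subgroup"
    unfolding GM_eq
    by (rule group.generate_consistent[OF group_BijGroup _ subgroup_gens_subgroup])
      (auto intro: generate.incl)
  then show "generate GM (gen ` {0..N}) = carrier GM" by (simp add: GM_eq)
  show "\<forall>(l, r)\<in>GM_relations N M. word_eval GM gen l = word_eval GM gen r"
    using GM_relations_hold by blast
qed (rule word_equiv_if_eval_eq)

end

theorem corollary2p5:
  fixes n :: nat and M :: "nat \<Rightarrow> nat \<Rightarrow> int" and \<alpha> :: real
    and a :: "nat \<Rightarrow> real" and b :: "nat \<Rightarrow> nat \<Rightarrow> complex" and R :: "nat \<Rightarrow> nat \<Rightarrow> complex"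
  assumes n: "n \<ge> 1"
    and detM: "mdet (2*n+1) M = 1"
    and real_eig: "{l. is_eigenvalue (2*n+1) (cmat M) l \<and> Im l = 0} = {complex_of_real \<alpha>}"
    and alpha_pos: "\<alpha> > 0" and alpha_ne1: "\<alpha> \<noteq> 1"
    and simple: "Polynomial.order (complex_of_real \<alpha>) (char_poly_fn (2*n+1) (cmat M)) = 1"
    and a_eig: "supp_vec (2*n+1) a" "a \<noteq> (\<lambda>_. 0)"
      "matvec (2*n+1) (\<lambda>i j. real_of_int (M i j)) a = (\<lambda>i. \<alpha> * a i)"
    and b_basis: "is_basis_of n b (upper_gen_space (2*n+1) (cmat M))"
    and R_def: "\<forall>j\<in>{1..n}. matvec (2*n+1) (cmat M) (b j) = (\<lambda>i. \<Sum>l=1..n. R l j * b l i)"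
  shows "has_presentation (GM_group n \<alpha> a b R) {0..2*n+1} (GM_gen n \<alpha> a b R)
           (GM_relations (2*n+1) M)"
proof -
  interpret GM_setting n "2*n+1" M \<alpha> a b R
    using n real_eig alpha_pos alpha_ne1 a_eig b_basis R_def by unfold_locales auto
  show ?thesis by (rule GM_has_presentation)
qed

end
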